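(* Let $\mathcal{A}$ be a simplicial hyperplane arrangement in $\mathbb{P}^3(\mathbb{R})$ consisting of $n$ hyperplanes and write $m:=m(\mathcal{A})$. Then $$\sum_{i=3}^m i t^\mathcal{A}_i \geq n + \sum_{i = 2}^{m-1} \frac{i(n-i)}{3(m-i)} h^\mathcal{A}_i .$$
   Context: An arrangement in $\mathbb{P}^3(\mathbb{R})$ is a finite set of projective hyperplanes (images of linear hyperplanes of $\mathbb{R}^4$) with empty common intersection; it induces a cell decomposition of $\mathbb{P}^3$ whose 3-cells are chambers. Each chamber is bounded by at least $4$ hyperplanes (walls); $\mathcal{A}$ is simplicial if each chamber has exactly $4$ walls. Lines are the $2$-dimensional, and vertices the $1$-dimensional, subspaces of $\mathbb{R}^4$ that are intersections of the linear hyperplanes corresponding to $\mathcal{A}$; the weight of a line or vertex is the number of hyperplanes of $\mathcal{A}$ containing it. $h^\mathcal{A}_i$ is the number of lines of weight $i$, $t^\mathcal{A}_j$ ($j\ge 3$) the number of vertices of weight $j$, and $m(\mathcal{A})$ the largest $j$ with $t^\mathcal{A}_j>0$. *)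

theory Defs
  imports "HOL-Analysis.Analysis"
begin

text \<open>A projective hyperplane of P^3(R) is represented by the linear hyperplane
  (3-dimensional linear subspace) of R^4 of which it is the image.\<close>

definition lin_hyperplane :: "(real^4) set \<Rightarrow> bool" where
  "lin_hyperplane H \<longleftrightarrow> subspace H \<and> dim H = 3"

text \<open>An arrangement in P^3(R): finite set of hyperplanes with empty common
  projective intersection, i.e. the linear hyperplanes meet only in 0.\<close>

definition arrangement :: "(real^4) set set \<Rightarrow> bool" where
  "arrangement A \<longleftrightarrow> finite A \<and> A \<noteq> {} \<and> (\<forall>H\<in>A. lin_hyperplane H) \<and> \<Inter>A = {0}"

text \<open>Chambers of the central arrangement in R^4: connected components of the
  complement of the union of the hyperplanes. The chambers of the projective
  arrangement are the images of these (K and -K give the same projective chamber),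
  with the same walls.\<close>

definition chambers :: "(real^4) set set \<Rightarrow> (real^4) set set" where
  "chambers A = {connected_component_set (- \<Union>A) x | x. x \<notin> \<Union>A}"

text \<open>Walls of a chamber: hyperplanes containing a 2-dimensional face (a 3-dimensional
  face of the cone) of the chamber.\<close>

definition walls :: "(real^4) set set \<Rightarrow> (real^4) set \<Rightarrow> (real^4) set set" where
  "walls A K = {H \<in> A. aff_dim (H \<inter> closure K) = 3}"

definition simplicial :: "(real^4) set set \<Rightarrow> bool" where
  "simplicial A \<longleftrightarrow> arrangement A \<and> (\<forall>K\<in>chambers A. card (walls A K) = 4)"

definition flats :: "(real^4) set set \<Rightarrow> (real^4) set set" where
  "flats A = {\<Inter>B | B. B \<subseteq> A \<and> B \<noteq> {}}"

definition lines :: "(real^4) set set \<Rightarrow> (real^4) set set" where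
  "lines A = {X \<in> flats A. dim X = 2}"

definition vertices :: "(real^4) set set \<Rightarrow> (real^4) set set" where
  "vertices A = {X \<in> flats A. dim X = 1}"

definition weight :: "(real^4) set set \<Rightarrow> (real^4) set \<Rightarrow> nat" where
  "weight A X = card {H \<in> A. X \<subseteq> H}"

definition h_num :: "(real^4) set set \<Rightarrow> nat \<Rightarrow> nat" where
  "h_num A i = card {X \<in> lines A. weight A X = i}"

definition t_num :: "(real^4) set set \<Rightarrow> nat \<Rightarrow> nat" where
  "t_num A j = card {X \<in> vertices A. weight A X = j}"

definition m_max :: "(real^4) set set \<Rightarrow> nat" where
  "m_max A = Max {j. 3 \<le> j \<and> t_num A j > 0}"

end

(* For a hyperplane H of A, the other hyperplanes cut the projective plane H in a line
   arrangement whose lines and points are the lines and vertices of A lying in H. Melchior's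
   inequality 3 + sum_v r_v <= 3 t for this plane arrangement, together with the estimate
   (n - w) / (m - w) for the number of vertices on a line of weight w, bounds the number of
   vertices on H from below. Summing over H and counting vertices and lines against the
   hyperplanes containing them gives the inequality.

   Melchior's inequality is proved by counting the regions of the central arrangement in the
   3-dimensional subspace H in two ways. Deletion and restriction give at least
   2 + 2 sum_v (r_v - 1) regions. On the other hand, a slice of the closed cone of a region is a
   compact convex polygon whose extreme points, at least three of them, lie on points of the
   arrangement, while a point of degree r is a corner of at most 4 r regions. *)

theory Submission
  imports Defs
begin

section \<open>Hyperplanes through the origin\<close>

definition linear_hyperplane :: "'a::euclidean_space set \<Rightarrow> bool" where
  "linear_hyperplane H \<longleftrightarrow> (\<exists>a. a \<noteq> 0 \<and> H = {x. a \<bullet> x = 0})"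

definition normal :: "'a::euclidean_space set \<Rightarrow> 'a" where
  "normal H = (SOME a. a \<noteq> 0 \<and> H = {x. a \<bullet> x = 0})"

definition central_arrangement :: "'a::euclidean_space set set \<Rightarrow> bool" where
  "central_arrangement B \<longleftrightarrow> finite B \<and> (\<forall>H\<in>B. linear_hyperplane H)"

lemma linear_hyperplane_normal:
  assumes "linear_hyperplane H"
  shows "normal H \<noteq> 0" "H = {x. normal H \<bullet> x = 0}"
  using someI_ex[OF assms[unfolded linear_hyperplane_def]] unfolding normal_def by auto

lemma mem_linear_hyperplane: "linear_hyperplane H \<Longrightarrow> x \<in> H \<longleftrightarrow> normal H \<bullet> x = 0"
  using linear_hyperplane_normal(2) by blast

lemma subspace_linear_hyperplane: "linear_hyperplane H \<Longrightarrow> subspace H"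
  unfolding linear_hyperplane_def using subspace_hyperplane by blast

lemma dim_linear_hyperplane: "linear_hyperplane (H :: 'a::euclidean_space set) \<Longrightarrow> dim H = DIM('a) - 1"
  unfolding linear_hyperplane_def using dim_hyperplane by blast

lemma lin_hyperplane_imp_linear_hyperplane:
  assumes "lin_hyperplane H"
  shows "linear_hyperplane H"
proof -
  have "dim H = DIM(real^4) - 1" "subspace H" using assms unfolding lin_hyperplane_def by auto
  then obtain a where "a \<noteq> 0" "span H = {x. a \<bullet> x = 0}" using lowdim_eq_hyperplane by metis
  then show ?thesis unfolding linear_hyperplane_def using \<open>subspace H\<close> span_eq_iff by metis
qed

lemma dim_Int_linear_hyperplane:
  fixes S :: "'a::euclidean_space set"
  assumes "subspace S" "linear_hyperplane H" "\<not> S \<subseteq> H"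
  shows "dim (S \<inter> H) + 1 = dim S"
proof -
  have sH: "subspace H" by (rule subspace_linear_hyperplane[OF assms(2)])
  have "S \<inter> H \<subseteq> S" "S \<inter> H \<noteq> S" using assms(3) by auto
  then have "dim (S \<inter> H) < dim S"
    using subspace_dim_equal[of "S \<inter> H" S] dim_subset[of "S \<inter> H" S] assms(1) sH
    by (force simp: subspace_inter)
  moreover have "dim {x + y |x y. x \<in> S \<and> y \<in> H} \<le> DIM('a)"
    using dim_subset_UNIV by blast
  then have "dim S + dim H \<le> dim (S \<inter> H) + DIM('a)"
    using dim_sums_Int[OF assms(1) sH] by linarith
  ultimately show ?thesis using dim_linear_hyperplane[OF assms(2)] DIM_positive[where 'a='a] by linarith
qed

lemma subspace_dim_1_eq:
  fixes U V :: "'a::euclidean_space set"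
  assumes "subspace U" "subspace V" "dim U = 1" "dim V = 1" "x \<in> U" "x \<in> V" "x \<noteq> 0"
  shows "U = V"
proof -
  have "span {x} = U" "span {x} = V"
    using subspace_dim_equal[of "span {x}"] assms span_minimal[of "{x}"] by (auto simp: dim_span)
  then show ?thesis by simp
qed

lemma subspace_dim_1_obtain_span:
  fixes V :: "'a::euclidean_space set"
  assumes "subspace V" "dim V = 1"
  obtains u where "u \<noteq> 0" "u \<in> V" "V = span {u}"
proof -
  have "\<not> V \<subseteq> {0}" using assms(2) dim_eq_0[of V] by simp
  then obtain u where u: "u \<in> V" "u \<noteq> 0" by blast
  have "span {u} = V"
    by (rule subspace_dim_1_eq) (use assms u in \<open>auto intro: span_base\<close>)
  with u that show ?thesis by blast
qed

lemma sgn_positive_combination: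
  fixes p q s t :: real
  assumes "sgn p = sgn q" "s > 0" "t > 0"
  shows "sgn (s * p + t * q) = sgn p"
proof -
  have pq: "(0 < p \<longleftrightarrow> 0 < q) \<and> (p < 0 \<longleftrightarrow> q < 0)"
    using assms(1) by (auto simp: sgn_if split: if_splits)
  show ?thesis
  proof (cases p "0::real" rule: linorder_cases)
    case less
    then have "s * p + t * q < 0" using pq assms(2,3) by (simp add: add_neg_neg mult_pos_neg)
    then show ?thesis using less by simp
  next
    case equal
    then have "q = 0" using pq by linarith
    then show ?thesis using equal by simp
  next
    case greater
    then have "s * p + t * q > 0" using pq assms(2,3) by (simp add: add_pos_pos)
    then show ?thesis using greater by simp
  qed
qed

lemma inner_crossing_point:
  fixes a x y :: "'a::real_inner"
  assumes "sgn (a \<bullet> x) \<noteq> sgn (a \<bullet> y)" "a \<bullet> x \<noteq> 0" "a \<bullet> y \<noteq> 0"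
  shows "a \<bullet> (\<bar>a \<bullet> y\<bar> *\<^sub>R x + \<bar>a \<bullet> x\<bar> *\<^sub>R y) = 0"
proof -
  have "a \<bullet> x > 0 \<and> a \<bullet> y < 0 \<or> a \<bullet> x < 0 \<and> a \<bullet> y > 0"
    using assms by (auto simp: sgn_if split: if_splits)
  then show ?thesis by (auto simp: inner_add_right abs_if mult.commute)
qed

lemma sgn_eq_if_nonneg_mult:
  fixes s a :: real
  assumes "s = 1 \<or> s = -1" "a \<noteq> 0" "0 \<le> s * a"
  shows "s = sgn a"
  using assms by (auto simp: sgn_if)

lemma nonneg_mult_if_sgn_eq:
  fixes s a b :: real
  assumes "0 \<le> s * a" "sgn b = sgn a"
  shows "0 \<le> s * b"
proof -
  have "(0 < b \<longleftrightarrow> 0 < a) \<and> (b < 0 \<longleftrightarrow> a < 0)" using assms(2) by (auto simp: sgn_if split: if_splits)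
  then show ?thesis using assms(1) by (auto simp: zero_le_mult_iff)
qed

section \<open>Regions of a central arrangement\<close>

text \<open>A region of S minus the hyperplanes of B is represented by its sign vector, extended by
  undefined outside B; the sign classes are convex, hence they are the connected components.
  When S has dimension 3, every region of the projective plane S appears as two opposite
  regions.\<close>

definition sign_vector :: "'a::euclidean_space set set \<Rightarrow> 'a \<Rightarrow> 'a set \<Rightarrow> real" where
  "sign_vector B x = (\<lambda>H\<in>B. sgn (normal H \<bullet> x))"

definition regions :: "'a::euclidean_space set \<Rightarrow> 'a set set \<Rightarrow> ('a set \<Rightarrow> real) set" where
  "regions S B = sign_vector B ` (S - \<Union>B)"

lemma finite_regions: "finite B \<Longrightarrow> finite (regions S B)"
proof -
  assume "finite B"
  have "sign_vector B x \<in> PiE B (\<lambda>_. {-1, 0, 1})" for x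
    unfolding sign_vector_def restrict_PiE_iff by (simp add: sgn_if)
  then have "regions S B \<subseteq> PiE B (\<lambda>_. {-1, 0, 1})" unfolding regions_def by blast
  then show ?thesis by (rule finite_subset) (simp add: finite_PiE \<open>finite B\<close>)
qed

lemma card_regions_empty: "0 \<in> S \<Longrightarrow> card (regions S {}) = 1"
proof -
  assume "0 \<in> S"
  then have "regions S {} = {\<lambda>_. undefined}" unfolding regions_def sign_vector_def by force
  then show ?thesis by simp
qed

lemma sign_vector_insert: "sign_vector (insert H B) x = (sign_vector B x)(H := sgn (normal H \<bullet> x))"
  unfolding sign_vector_def by auto

lemma restrict_sign_vector_insert: "restrict (sign_vector (insert H B) x) B = sign_vector B x"
  unfolding sign_vector_def by auto

lemma sign_vector_in_units:
  assumes "linear_hyperplane H" "H \<in> B" "x \<notin> H"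
  shows "sign_vector B x H = 1 \<or> sign_vector B x H = -1"
  using assms mem_linear_hyperplane[OF assms(1)] unfolding sign_vector_def by (auto simp: sgn_if)

lemma sign_vector_eq_imp_not_in_Union:
  assumes "central_arrangement B" "sign_vector B y = sign_vector B x" "x \<notin> \<Union>B"
  shows "y \<notin> \<Union>B"
proof
  assume "y \<in> \<Union>B"
  then obtain H where H: "H \<in> B" "y \<in> H" by blast
  then have hH: "linear_hyperplane H" using assms(1) unfolding central_arrangement_def by blast
  have "sgn (normal H \<bullet> x) = sgn (normal H \<bullet> y)"
    using fun_cong[OF assms(2), of H] H(1) unfolding sign_vector_def by simp
  then have "x \<in> H" using H(2) mem_linear_hyperplane[OF hH] by (simp add: sgn_zero_iff)
  then show False using H(1) assms(3) by blast
qed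

lemma sign_vector_scale:
  assumes "0 < t"
  shows "sign_vector B (t *\<^sub>R x) = sign_vector B x"
  using assms unfolding sign_vector_def by (simp add: sgn_mult)

lemma sign_vector_locally_constant:
  assumes "central_arrangement B" "x \<notin> \<Union>B"
  obtains e where "e > 0" "\<And>t. \<bar>t\<bar> \<le> e \<Longrightarrow> sign_vector B (x + t *\<^sub>R d) = sign_vector B x"
proof -
  have "\<forall>\<^sub>F t in nhds 0. \<forall>H\<in>B. 0 < (normal H \<bullet> x) * (normal H \<bullet> (x + t *\<^sub>R d))"
  proof (rule eventually_ball_finite)
    show "finite B" using assms(1) unfolding central_arrangement_def by blast
  next
    show "\<forall>H\<in>B. \<forall>\<^sub>F t in nhds 0. 0 < (normal H \<bullet> x) * (normal H \<bullet> (x + t *\<^sub>R d))"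
    proof
      fix H assume "H \<in> B"
      then have "normal H \<bullet> x \<noteq> 0"
        using assms mem_linear_hyperplane unfolding central_arrangement_def by blast
      define f where "f t = (normal H \<bullet> x) * (normal H \<bullet> (x + t *\<^sub>R d))" for t
      have "isCont f 0" unfolding f_def by (intro continuous_intros)
      then have "(f \<longlongrightarrow> f 0) (nhds 0)" by (simp only: isCont_def tendsto_at_iff_tendsto_nhds)
      moreover have "0 < f 0" using \<open>normal H \<bullet> x \<noteq> 0\<close> unfolding f_def
        by (auto simp: zero_less_mult_iff linorder_neq_iff)
      ultimately show "\<forall>\<^sub>F t in nhds 0. 0 < (normal H \<bullet> x) * (normal H \<bullet> (x + t *\<^sub>R d))"
        unfolding f_def by (rule order_tendstoD(1))
    qed
  qed
  then obtain e where "e > 0"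
    and e: "\<And>t. dist t 0 \<le> e \<Longrightarrow> \<forall>H\<in>B. 0 < (normal H \<bullet> x) * (normal H \<bullet> (x + t *\<^sub>R d))"
    unfolding eventually_nhds_metric_le by blast
  have "sign_vector B (x + t *\<^sub>R d) = sign_vector B x" if "\<bar>t\<bar> \<le> e" for t
  proof
    fix H
    show "sign_vector B (x + t *\<^sub>R d) H = sign_vector B x H"
    proof (cases "H \<in> B")
      case True
      then have "0 < (normal H \<bullet> x) * (normal H \<bullet> (x + t *\<^sub>R d))" using e that by simp
      then have "sgn (normal H \<bullet> (x + t *\<^sub>R d)) = sgn (normal H \<bullet> x)"
        by (auto simp: zero_less_mult_iff)
      then show ?thesis using True unfolding sign_vector_def by simp
    qed (simp add: sign_vector_def)
  qed
  with \<open>e > 0\<close> show ?thesis using that by blast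
qed

lemma sign_vector_positive_combination:
  assumes "sign_vector B x = sign_vector B y" "s > 0" "t > 0"
  shows "sign_vector B (s *\<^sub>R x + t *\<^sub>R y) = sign_vector B x"
proof (rule ext)
  fix H
  show "sign_vector B (s *\<^sub>R x + t *\<^sub>R y) H = sign_vector B x H"
    using fun_cong[OF assms(1), of H] sgn_positive_combination[OF _ assms(2,3)]
    unfolding sign_vector_def by (auto simp: inner_add_right)
qed

lemma regions_mono: "S' \<subseteq> S \<Longrightarrow> regions S' B \<subseteq> regions S B"
  unfolding regions_def by blast

lemma restrict_region: "\<sigma> \<in> regions S B \<Longrightarrow> restrict \<sigma> B = \<sigma>"
  unfolding regions_def sign_vector_def by (elim imageE) simp

lemma mem_regions_insert:
  assumes "H0 \<notin> B" "restrict \<sigma> B = \<sigma>"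
  shows "\<sigma>(H0 := s) \<in> regions S (insert H0 B) \<longleftrightarrow>
    (\<exists>x \<in> S - \<Union>(insert H0 B). sign_vector B x = \<sigma> \<and> sgn (normal H0 \<bullet> x) = s)"
proof
  assume "\<sigma>(H0 := s) \<in> regions S (insert H0 B)"
  then obtain x where x: "\<sigma>(H0 := s) = sign_vector (insert H0 B) x" "x \<in> S - \<Union>(insert H0 B)"
    unfolding regions_def by (rule imageE)
  have "sign_vector B x = restrict (\<sigma>(H0 := s)) B"
    unfolding x(1) restrict_sign_vector_insert ..
  also have "\<dots> = \<sigma>" using restrict_fupd[OF assms(1)] assms(2) by (rule trans)
  finally have "sign_vector B x = \<sigma>" .
  moreover have "sgn (normal H0 \<bullet> x) = s"
    using fun_cong[OF x(1), of H0] unfolding sign_vector_def by simp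
  ultimately show "\<exists>x \<in> S - \<Union>(insert H0 B). sign_vector B x = \<sigma> \<and> sgn (normal H0 \<bullet> x) = s"
    using x(2) by blast
next
  assume "\<exists>x \<in> S - \<Union>(insert H0 B). sign_vector B x = \<sigma> \<and> sgn (normal H0 \<bullet> x) = s"
  then obtain x where x: "x \<in> S - \<Union>(insert H0 B)" "sign_vector B x = \<sigma>" "sgn (normal H0 \<bullet> x) = s"
    by blast
  then have "\<sigma>(H0 := s) = sign_vector (insert H0 B) x" by (simp add: sign_vector_insert)
  then show "\<sigma>(H0 := s) \<in> regions S (insert H0 B)" unfolding regions_def using x(1) by (rule image_eqI)
qed

lemma region_meets_hyperplane:
  assumes "central_arrangement (insert H0 B)" "subspace S"
    and "x \<in> S - \<Union>(insert H0 B)" "y \<in> S - \<Union>(insert H0 B)"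
    and "sign_vector B x = sign_vector B y" "sgn (normal H0 \<bullet> x) \<noteq> sgn (normal H0 \<bullet> y)"
  shows "sign_vector B x \<in> regions (S \<inter> H0) B"
proof -
  have hB: "central_arrangement B" and h0: "linear_hyperplane H0"
    using assms(1) unfolding central_arrangement_def by auto
  define a where "a = normal H0 \<bullet> x"
  define b where "b = normal H0 \<bullet> y"
  have "a \<noteq> 0" "b \<noteq> 0"
    using assms(3,4) mem_linear_hyperplane[OF h0] unfolding a_def b_def by auto
  define z where "z = \<bar>b\<bar> *\<^sub>R x + \<bar>a\<bar> *\<^sub>R y"
  have "z \<in> S" unfolding z_def using assms(2-4) by (simp add: subspace_add subspace_scale)
  moreover have "z \<in> H0"
    using inner_crossing_point[OF assms(6)] \<open>a \<noteq> 0\<close> \<open>b \<noteq> 0\<close> mem_linear_hyperplane[OF h0]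
    unfolding z_def a_def b_def by simp
  moreover have "sign_vector B z = sign_vector B x"
    unfolding z_def using sign_vector_positive_combination[OF assms(5)] \<open>a \<noteq> 0\<close> \<open>b \<noteq> 0\<close> by simp
  moreover have "z \<notin> \<Union>B"
    using sign_vector_eq_imp_not_in_Union[OF hB calculation(3)] assms(3) by blast
  ultimately show ?thesis unfolding regions_def by (intro image_eqI[of _ _ z]) auto
qed

lemma region_extends_across_hyperplane:
  assumes "central_arrangement (insert H0 B)" "H0 \<notin> B" "subspace S" "\<not> S \<subseteq> H0"
    and "\<sigma> \<in> regions (S \<inter> H0) B" "s = 1 \<or> s = -1"
  shows "\<sigma>(H0 := s) \<in> regions S (insert H0 B)"
proof -
  have hB: "central_arrangement B" and h0: "linear_hyperplane H0"
    using assms(1) unfolding central_arrangement_def by auto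
  obtain x where x: "x \<in> S" "x \<in> H0" "x \<notin> \<Union>B" "sign_vector B x = \<sigma>"
    using assms(5) unfolding regions_def by auto
  obtain d where d: "d \<in> S" "d \<notin> H0" using assms(4) by blast
  obtain e where "e > 0" and e: "\<And>t. \<bar>t\<bar> \<le> e \<Longrightarrow> sign_vector B (x + t *\<^sub>R d) = sign_vector B x"
    using sign_vector_locally_constant[OF hB x(3)] by blast
  define c where "c = normal H0 \<bullet> d"
  define y where "y = x + (s * sgn c * e) *\<^sub>R d"
  have "normal H0 \<bullet> x = 0" "c \<noteq> 0" using x(2) d(2) mem_linear_hyperplane[OF h0] c_def by auto
  then have "normal H0 \<bullet> y = s * e * \<bar>c\<bar>" unfolding y_def c_def by (simp add: inner_add_right abs_sgn)
  then have sgn_y: "sgn (normal H0 \<bullet> y) = s"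
    using assms(6) \<open>e > 0\<close> \<open>c \<noteq> 0\<close> by (auto simp: sgn_mult)
  have "\<bar>s * sgn c * e\<bar> \<le> e" using assms(6) \<open>e > 0\<close> \<open>c \<noteq> 0\<close> by (auto simp: abs_mult)
  then have sv_y: "sign_vector B y = \<sigma>" unfolding y_def using e x(4) by simp
  have "y \<in> S" unfolding y_def using x(1) d(1) assms(3) by (simp add: subspace_add subspace_scale)
  moreover have "y \<notin> H0" using sgn_y assms(6) mem_linear_hyperplane[OF h0] by auto
  moreover have "y \<notin> \<Union>B" by (rule sign_vector_eq_imp_not_in_Union[OF hB sv_y[folded x(4)] x(3)])
  ultimately have "y \<in> S - \<Union>(insert H0 B)" by blast
  with sv_y sgn_y show ?thesis
    unfolding mem_regions_insert[OF assms(2) restrict_region[OF assms(5)]] by blast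
qed

lemma regions_fiber:
  assumes "central_arrangement (insert H0 B)" "H0 \<notin> B" "\<sigma> \<in> regions S B"
  shows "{\<tau> \<in> regions S (insert H0 B). restrict \<tau> B = \<sigma>}
    = {\<sigma>(H0 := 1), \<sigma>(H0 := -1)} \<inter> regions S (insert H0 B)"
proof (intro equalityI subsetI)
  let ?R = "regions S (insert H0 B)"
  have h0: "linear_hyperplane H0" using assms(1) unfolding central_arrangement_def by auto
  fix \<tau> assume \<tau>: "\<tau> \<in> {\<tau> \<in> ?R. restrict \<tau> B = \<sigma>}"
  then obtain x where x: "\<tau> = sign_vector (insert H0 B) x" "x \<in> S - \<Union>(insert H0 B)"
    unfolding regions_def by blast
  then have "sign_vector B x = \<sigma>" using \<tau> by (simp add: restrict_sign_vector_insert)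
  then have \<tau>_eq: "\<tau> = \<sigma>(H0 := sgn (normal H0 \<bullet> x))" using x(1) by (simp add: sign_vector_insert)
  have "normal H0 \<bullet> x \<noteq> 0" using x(2) mem_linear_hyperplane[OF h0] by auto
  then have "sgn (normal H0 \<bullet> x) = 1 \<or> sgn (normal H0 \<bullet> x) = -1" by (auto simp: sgn_if)
  then have "\<tau> = \<sigma>(H0 := 1) \<or> \<tau> = \<sigma>(H0 := -1)" using \<tau>_eq by auto
  with \<tau> show "\<tau> \<in> {\<sigma>(H0 := 1), \<sigma>(H0 := -1)} \<inter> ?R" by blast
next
  let ?R = "regions S (insert H0 B)"
  have upd: "restrict (\<sigma>(H0 := s)) B = \<sigma>" for s
    using restrict_fupd[OF assms(2)] restrict_region[OF assms(3)] by (rule trans)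
  fix \<tau> assume "\<tau> \<in> {\<sigma>(H0 := 1), \<sigma>(H0 := -1)} \<inter> ?R"
  then have "\<tau> \<in> ?R" "restrict \<tau> B = \<sigma>" using upd by blast+
  then show "\<tau> \<in> {\<tau> \<in> ?R. restrict \<tau> B = \<sigma>}" by blast
qed

lemma region_on_one_side:
  assumes "central_arrangement (insert H0 B)" "H0 \<notin> B" "subspace S"
    and "\<sigma> \<in> regions S B" "\<sigma> \<notin> regions (S \<inter> H0) B"
  obtains s where "s = 1 \<or> s = -1" "\<sigma>(H0 := s) \<in> regions S (insert H0 B)"
    "\<sigma>(H0 := -s) \<notin> regions S (insert H0 B)"
proof -
  have h0: "linear_hyperplane H0" using assms(1) unfolding central_arrangement_def by auto
  note mem = mem_regions_insert[OF assms(2) restrict_region[OF assms(4)]]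
  obtain x where x: "x \<in> S - \<Union>B" "sign_vector B x = \<sigma>"
    using assms(4) unfolding regions_def by blast
  have "x \<notin> H0"
  proof
    assume "x \<in> H0"
    then have "x \<in> S \<inter> H0 - \<Union>B" using x(1) by blast
    then have "sign_vector B x \<in> regions (S \<inter> H0) B" unfolding regions_def by (rule imageI)
    then show False using assms(5) x(2) by simp
  qed
  define s where "s = sgn (normal H0 \<bullet> x)"
  have s: "s = 1 \<or> s = -1"
    using \<open>x \<notin> H0\<close> mem_linear_hyperplane[OF h0] unfolding s_def by (auto simp: sgn_if)
  have x': "x \<in> S - \<Union>(insert H0 B)" using x(1) \<open>x \<notin> H0\<close> by blast
  then have "\<sigma>(H0 := s) \<in> regions S (insert H0 B)" unfolding mem using x(2) s_def by blast
  moreover have "\<sigma>(H0 := -s) \<notin> regions S (insert H0 B)"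
  proof
    assume "\<sigma>(H0 := -s) \<in> regions S (insert H0 B)"
    then obtain y where y: "y \<in> S - \<Union>(insert H0 B)" "sign_vector B y = \<sigma>" "sgn (normal H0 \<bullet> y) = -s"
      unfolding mem by blast
    have "sign_vector B x \<in> regions (S \<inter> H0) B"
    proof (rule region_meets_hyperplane[OF assms(1,3) x' y(1)])
      show "sign_vector B x = sign_vector B y" using x(2) y(2) by simp
      show "sgn (normal H0 \<bullet> x) \<noteq> sgn (normal H0 \<bullet> y)" using s y(3) unfolding s_def by auto
    qed
    then show False using assms(5) x(2) by simp
  qed
  ultimately show ?thesis using s that by blast
qed

lemma card_regions_fiber:
  assumes "central_arrangement (insert H0 B)" "H0 \<notin> B" "subspace S" "\<not> S \<subseteq> H0"
    and "\<sigma> \<in> regions S B"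
  shows "card {\<tau> \<in> regions S (insert H0 B). restrict \<tau> B = \<sigma>}
    = (if \<sigma> \<in> regions (S \<inter> H0) B then 2 else 1)"
proof -
  let ?R = "regions S (insert H0 B)"
  have distinct: "\<sigma>(H0 := 1) \<noteq> \<sigma>(H0 := -1)"
  proof
    assume "\<sigma>(H0 := 1) = \<sigma>(H0 := -1)"
    then have "(\<sigma>(H0 := 1)) H0 = (\<sigma>(H0 := -1)) H0" by (rule fun_cong)
    then show False by simp
  qed
  show ?thesis
  proof (cases "\<sigma> \<in> regions (S \<inter> H0) B")
    case True
    then have "{\<sigma>(H0 := 1), \<sigma>(H0 := -1)} \<subseteq> ?R"
      using region_extends_across_hyperplane[OF assms(1-4)] by auto
    then show ?thesis using True regions_fiber[OF assms(1,2,5)] distinct by (simp add: Int_absorb2)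
  next
    case False
    then obtain s where s: "s = 1 \<or> s = -1" "\<sigma>(H0 := s) \<in> ?R" "\<sigma>(H0 := -s) \<notin> ?R"
      using region_on_one_side[OF assms(1-3,5)] by blast
    then have "{\<sigma>(H0 := 1), \<sigma>(H0 := -1)} = {\<sigma>(H0 := s), \<sigma>(H0 := -s)}" by auto
    then have "{\<sigma>(H0 := 1), \<sigma>(H0 := -1)} \<inter> ?R = {\<sigma>(H0 := s)}" using s(2,3) by auto
    then show ?thesis using False regions_fiber[OF assms(1,2,5)] by simp
  qed
qed

theorem card_regions_insert:
  assumes "central_arrangement (insert H0 B)" "H0 \<notin> B" "subspace S" "\<not> S \<subseteq> H0"
  shows "card (regions S (insert H0 B)) = card (regions S B) + card (regions (S \<inter> H0) B)"
proof -
  let ?Rins = "regions S (insert H0 B)" and ?Rdel = "regions S B" and ?Rres = "regions (S \<inter> H0) B"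
  have fin: "finite ?Rdel" "finite ?Rins"
    using assms(1) unfolding central_arrangement_def by (auto intro: finite_regions)
  have img: "(\<lambda>\<tau>. restrict \<tau> B) ` ?Rins \<subseteq> ?Rdel"
  proof
    fix \<rho> assume "\<rho> \<in> (\<lambda>\<tau>. restrict \<tau> B) ` ?Rins"
    then obtain \<tau> where \<rho>: "\<rho> = restrict \<tau> B" and \<tau>: "\<tau> \<in> ?Rins" by (rule imageE)
    from \<tau> obtain x where x: "\<tau> = sign_vector (insert H0 B) x" "x \<in> S - \<Union>(insert H0 B)"
      unfolding regions_def by (rule imageE)
    have "x \<in> S - \<Union>B" using x(2) by blast
    then show "\<rho> \<in> ?Rdel" unfolding regions_def \<rho> x(1) restrict_sign_vector_insert by (rule imageI)
  qed
  have "card ?Rins = (\<Sum>\<sigma>\<in>?Rdel. card {\<tau> \<in> ?Rins. restrict \<tau> B = \<sigma>})"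
    using sum.group[OF fin(2,1) img, of "\<lambda>_. 1::nat"] by simp
  also have "\<dots> = (\<Sum>\<sigma>\<in>?Rdel. 1 + (if \<sigma> \<in> ?Rres then 1 else 0))"
  proof (rule sum.cong[OF refl])
    fix \<sigma> assume "\<sigma> \<in> ?Rdel"
    then show "card {\<tau> \<in> ?Rins. restrict \<tau> B = \<sigma>} = 1 + (if \<sigma> \<in> ?Rres then 1 else 0)"
      using card_regions_fiber[OF assms] by simp
  qed
  also have "\<dots> = card ?Rdel + card {\<sigma> \<in> ?Rdel. \<sigma> \<in> ?Rres}"
    unfolding sum.distrib using sum.inter_filter[OF fin(1), of "\<lambda>_. 1::nat"] by simp
  also have "{\<sigma> \<in> ?Rdel. \<sigma> \<in> ?Rres} = ?Rres" using regions_mono[of "S \<inter> H0" S B] by blast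
  finally show ?thesis .
qed

lemma card_regions_singleton:
  assumes "subspace S" "linear_hyperplane H0" "\<not> S \<subseteq> H0"
  shows "card (regions S {H0}) = 2"
proof -
  have "central_arrangement {H0}" using assms(2) unfolding central_arrangement_def by simp
  then have "card (regions S {H0}) = card (regions S {}) + card (regions (S \<inter> H0) {})"
    using card_regions_insert[of H0 "{}" S] assms by simp
  moreover have "0 \<in> S" "0 \<in> H0"
    using subspace_0[OF assms(1)] subspace_0[OF subspace_linear_hyperplane[OF assms(2)]] by auto
  ultimately show ?thesis using card_regions_empty[of S] card_regions_empty[of "S \<inter> H0"] by simp
qed

lemma card_regions_ge_2:
  assumes "central_arrangement B" "B \<noteq> {}" "subspace S" "x \<in> S - \<Union>B"
  shows "2 \<le> card (regions S B)"
proof -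
  obtain H where H: "H \<in> B" using assms(2) by blast
  have "linear_hyperplane H" using H assms(1) unfolding central_arrangement_def by blast
  then have "normal H \<bullet> x \<noteq> 0" using H assms(4) mem_linear_hyperplane by blast
  then have "sign_vector B x H \<noteq> sign_vector B (-x) H"
    using H unfolding sign_vector_def by (auto simp: sgn_if)
  then have "sign_vector B x \<noteq> sign_vector B (-x)" by metis
  moreover have "-x \<in> S - \<Union>B"
  proof -
    have "-x \<notin> H'" if "H' \<in> B" for H'
      using that assms(1,4) subspace_neg[OF subspace_linear_hyperplane, of H' "-x"]
      unfolding central_arrangement_def by auto
    then show ?thesis using assms(3,4) subspace_neg by blast
  qed
  then have "{sign_vector B x, sign_vector B (-x)} \<subseteq> regions S B"
    using assms(4) unfolding regions_def by blast
  then have "card {sign_vector B x, sign_vector B (-x)} \<le> card (regions S B)"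
    using assms(1) unfolding central_arrangement_def by (intro card_mono finite_regions) auto
  ultimately show ?thesis by simp
qed

lemma card_regions_new_point:
  assumes "central_arrangement B" "B \<noteq> {}" "subspace L" "dim L = 2" "\<forall>H\<in>B. \<not> L \<subseteq> H"
    and "linear_hyperplane H0" "\<not> L \<subseteq> H0" "L \<inter> H0 \<notin> (\<lambda>H. L \<inter> H) ` B"
  shows "2 \<le> card (regions (L \<inter> H0) B)"
proof -
  have sub0: "subspace (L \<inter> H0)" using assms(3,6) by (simp add: subspace_inter subspace_linear_hyperplane)
  have dim0: "dim (L \<inter> H0) = 1" using dim_Int_linear_hyperplane[OF assms(3,6,7)] assms(4) by simp
  then obtain x where x: "x \<noteq> 0" "x \<in> L \<inter> H0" using subspace_dim_1_obtain_span[OF sub0] by blast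
  have "x \<notin> H" if "H \<in> B" for H
  proof
    assume "x \<in> H"
    have hH: "linear_hyperplane H" using that assms(1) unfolding central_arrangement_def by blast
    have "dim (L \<inter> H) = 1" using dim_Int_linear_hyperplane[OF assms(3) hH] assms(4,5) that by simp
    moreover have "subspace (L \<inter> H)" using assms(3) hH by (simp add: subspace_inter subspace_linear_hyperplane)
    ultimately have "L \<inter> H = L \<inter> H0"
      using subspace_dim_1_eq[of "L \<inter> H" "L \<inter> H0" x] sub0 dim0 x \<open>x \<in> H\<close> by blast
    then show False using assms(8) that by blast
  qed
  then show ?thesis using card_regions_ge_2[OF assms(1,2) sub0] x(2) by blast
qed

lemma card_regions_line:
  assumes "central_arrangement B" "subspace L" "dim L = 2" "\<forall>H\<in>B. \<not> L \<subseteq> H"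
  shows "2 * card ((\<lambda>H. L \<inter> H) ` B) \<le> card (regions L B)"
proof -
  have "finite B" using assms(1) unfolding central_arrangement_def by blast
  then show ?thesis using assms
  proof (induction B rule: finite_induct)
    case empty
    then show ?case by simp
  next
    case (insert H0 B)
    have hB: "central_arrangement B" and h0: "linear_hyperplane H0"
      using insert.prems(1) unfolding central_arrangement_def by auto
    have IH: "2 * card ((\<lambda>H. L \<inter> H) ` B) \<le> card (regions L B)"
      using insert.prems(4) by (intro insert.IH[OF hB assms(2,3)]) simp
    have DR: "card (regions L (insert H0 B)) = card (regions L B) + card (regions (L \<inter> H0) B)"
      using insert.prems(4) by (intro card_regions_insert[OF insert.prems(1) insert.hyps(2) assms(2)]) simp
    show ?case
    proof (cases "L \<inter> H0 \<in> (\<lambda>H. L \<inter> H) ` B")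
      case True
      then show ?thesis using IH DR by (simp add: insert_absorb)
    next
      case False
      have "2 * card ((\<lambda>H. L \<inter> H) ` B) + 2 \<le> card (regions L B) + card (regions (L \<inter> H0) B)"
      proof (cases "B = {}")
        case True
        then show ?thesis
          using card_regions_empty[of L] card_regions_empty[of "L \<inter> H0"] assms(2) h0
          by (simp add: subspace_0 subspace_inter subspace_linear_hyperplane)
      next
        case nonempty: False
        then show ?thesis
          using card_regions_new_point[OF hB nonempty assms(2,3) _ h0 _ False] insert.prems(4) IH by simp
      qed
      moreover have "card ((\<lambda>H. L \<inter> H) ` insert H0 B) = card ((\<lambda>H. L \<inter> H) ` B) + 1"
        using False insert.hyps(1) by simp
      ultimately show ?thesis using IH DR by simp
    qed
  qed
qed

lemma regions_common_trace_eq: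
  assumes "central_arrangement B" "subspace S" "\<And>H. H \<in> B \<Longrightarrow> S \<inter> H = T" "H1 \<in> B"
    and "\<sigma> \<in> regions S B" "\<tau> \<in> regions S B" "\<sigma> H1 = \<tau> H1"
  shows "\<sigma> = \<tau>"
proof (rule ccontr)
  have hyp: "\<And>H. H \<in> B \<Longrightarrow> linear_hyperplane H" using assms(1) unfolding central_arrangement_def by blast
  obtain x y where x: "\<sigma> = sign_vector B x" "x \<in> S - \<Union>B"
    and y: "\<tau> = sign_vector B y" "y \<in> S - \<Union>B"
    using assms(5,6) unfolding regions_def by (auto elim!: imageE)
  have nz: "normal H \<bullet> x \<noteq> 0" "normal H \<bullet> y \<noteq> 0" if "H \<in> B" for H
    using that x(2) y(2) hyp mem_linear_hyperplane by blast+
  assume "\<sigma> \<noteq> \<tau>"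
  then obtain Hi where Hi: "Hi \<in> B" "sgn (normal Hi \<bullet> x) \<noteq> sgn (normal Hi \<bullet> y)"
    unfolding x(1) y(1) sign_vector_def by (auto simp: restrict_def fun_eq_iff split: if_splits)
  define z where "z = \<bar>normal Hi \<bullet> y\<bar> *\<^sub>R x + \<bar>normal Hi \<bullet> x\<bar> *\<^sub>R y"
  have "z \<in> S" unfolding z_def using assms(2) x(2) y(2) by (simp add: subspace_add subspace_scale)
  moreover have "z \<in> Hi"
    using inner_crossing_point[OF Hi(2) nz[OF Hi(1)]] mem_linear_hyperplane[OF hyp[OF Hi(1)]]
    unfolding z_def by simp
  ultimately have "z \<in> H1" using assms(3)[OF Hi(1)] assms(3)[OF assms(4)] by blast
  moreover have "sgn (normal H1 \<bullet> x) = sgn (normal H1 \<bullet> y)"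
    using assms(4,7) unfolding x(1) y(1) sign_vector_def by simp
  then have "sgn (normal H1 \<bullet> z) = sgn (normal H1 \<bullet> x)"
    using sgn_positive_combination[of "normal H1 \<bullet> x" "normal H1 \<bullet> y"] nz[OF Hi(1)]
    unfolding z_def by (simp add: inner_add_right)
  ultimately show False
    using nz[OF assms(4)] mem_linear_hyperplane[OF hyp[OF assms(4)]] by (simp add: sgn_zero_iff)
qed

lemma card_regions_common_trace:
  assumes "central_arrangement B" "subspace S" "\<And>H. H \<in> B \<Longrightarrow> S \<inter> H = T"
  shows "card (regions S B) \<le> 2"
proof (cases "B = {}")
  case True
  then show ?thesis using card_regions_empty[of S] assms(2) by (simp add: subspace_0)
next
  case False
  then obtain H1 where H1: "H1 \<in> B" by blast
  have "linear_hyperplane H1" using H1 assms(1) unfolding central_arrangement_def by blast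
  have "inj_on (\<lambda>\<sigma>. \<sigma> H1) (regions S B)"
    using regions_common_trace_eq[OF assms H1] by (intro inj_onI)
  moreover have "(\<lambda>\<sigma>. \<sigma> H1) ` regions S B \<subseteq> {1, -1}"
  proof
    fix r assume "r \<in> (\<lambda>\<sigma>. \<sigma> H1) ` regions S B"
    then obtain x where "r = sign_vector B x H1" "x \<in> S - \<Union>B" unfolding regions_def by blast
    then show "r \<in> {1, -1}" using sign_vector_in_units[OF \<open>linear_hyperplane H1\<close> H1, of x] H1 by auto
  qed
  ultimately have "card (regions S B) \<le> card {1, -1 :: real}" by (rule card_inj_on_le) simp
  then show ?thesis by simp
qed

section \<open>Line arrangements in a three-dimensional subspace\<close>

text \<open>P plays the role of a projective plane: its lines and points are the 2- and 1-dimensional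
  traces of the hyperplanes of B.\<close>

definition plane_arrangement :: "'a::euclidean_space set \<Rightarrow> 'a set set \<Rightarrow> bool" where
  "plane_arrangement P B \<longleftrightarrow> subspace P \<and> dim P = 3 \<and> central_arrangement B \<and> (\<forall>H\<in>B. \<not> P \<subseteq> H)"

definition plane_lines :: "'a::euclidean_space set \<Rightarrow> 'a set set \<Rightarrow> 'a set set" where
  "plane_lines P B = (\<lambda>H. P \<inter> H) ` B"

definition plane_points :: "'a::euclidean_space set \<Rightarrow> 'a set set \<Rightarrow> 'a set set" where
  "plane_points P B = {X \<inter> Y | X Y. X \<in> plane_lines P B \<and> Y \<in> plane_lines P B \<and> X \<noteq> Y}"

definition point_degree :: "'a::euclidean_space set \<Rightarrow> 'a set set \<Rightarrow> 'a set \<Rightarrow> nat" where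
  "point_degree P B v = card {X \<in> plane_lines P B. v \<subseteq> X}"

lemma plane_arrangement_subset: "plane_arrangement P B \<Longrightarrow> B' \<subseteq> B \<Longrightarrow> plane_arrangement P B'"
  unfolding plane_arrangement_def central_arrangement_def by (auto intro: finite_subset)

lemma plane_arrangementD:
  assumes "plane_arrangement P B"
  shows "subspace P" "dim P = 3" "central_arrangement B" "finite B"
    and "\<And>H. H \<in> B \<Longrightarrow> linear_hyperplane H" "\<And>H. H \<in> B \<Longrightarrow> \<not> P \<subseteq> H"
  using assms unfolding plane_arrangement_def central_arrangement_def by auto

lemma finite_plane_lines: "finite B \<Longrightarrow> finite (plane_lines P B)"
  unfolding plane_lines_def by simp

lemma finite_plane_points: "finite B \<Longrightarrow> finite (plane_points P B)"
proof -
  assume "finite B"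
  have "plane_points P B \<subseteq> (\<lambda>(X, Y). X \<inter> Y) ` (plane_lines P B \<times> plane_lines P B)"
    unfolding plane_points_def by auto
  then show ?thesis using finite_plane_lines[OF \<open>finite B\<close>] by (auto intro: finite_subset)
qed

lemma plane_line:
  assumes "plane_arrangement P B" "X \<in> plane_lines P B"
  shows "subspace X" "dim X = 2" "X \<subseteq> P"
proof -
  obtain H where H: "H \<in> B" "X = P \<inter> H" using assms(2) unfolding plane_lines_def by blast
  note P = plane_arrangementD[OF assms(1)]
  show "subspace X" using H P(1) P(5)[OF H(1)] by (simp add: subspace_inter subspace_linear_hyperplane)
  show "dim X = 2" using dim_Int_linear_hyperplane[OF P(1) P(5) P(6)] H P(2) by simp
  show "X \<subseteq> P" using H by blast
qed

lemma plane_lines_not_subset: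
  assumes "plane_arrangement P B" "X \<in> plane_lines P B" "Y \<in> plane_lines P B" "X \<noteq> Y"
  shows "\<not> X \<subseteq> Y"
  using subspace_dim_equal[of X Y] plane_line[OF assms(1,2)] plane_line[OF assms(1,3)] assms(4) by auto

lemma plane_lines_Int:
  assumes "plane_arrangement P B" "X \<in> plane_lines P B" "Y \<in> plane_lines P B" "X \<noteq> Y"
  shows "subspace (X \<inter> Y)" "dim (X \<inter> Y) = 1"
proof -
  obtain H where H: "H \<in> B" "Y = P \<inter> H" using assms(3) unfolding plane_lines_def by blast
  note X = plane_line[OF assms(1,2)]
  have hH: "linear_hyperplane H" using plane_arrangementD(5)[OF assms(1) H(1)] .
  have XY: "X \<inter> Y = X \<inter> H" using H(2) X(3) by blast
  have "\<not> X \<subseteq> H" using plane_lines_not_subset[OF assms] H(2) X(3) by blast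
  then show "dim (X \<inter> Y) = 1" using dim_Int_linear_hyperplane[OF X(1) hH] X(2) XY by simp
  show "subspace (X \<inter> Y)" using X(1) plane_line(1)[OF assms(1,3)] by (rule subspace_inter)
qed

lemma plane_point:
  assumes "plane_arrangement P B" "v \<in> plane_points P B"
  shows "subspace v" "dim v = 1" "v \<subseteq> P"
  using assms(2) plane_lines_Int[OF assms(1)] plane_line(3)[OF assms(1)]
  unfolding plane_points_def by blast+

lemma plane_point_eq_Int:
  assumes "plane_arrangement P B" "X \<in> plane_lines P B" "Y \<in> plane_lines P B" "X \<noteq> Y"
    and "subspace v" "dim v = 1" "v \<subseteq> X \<inter> Y"
  shows "v = X \<inter> Y"
  using subspace_dim_equal[OF assms(5) _ assms(7)] plane_lines_Int[OF assms(1-4)] assms(6) by simp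

lemma plane_point_if_dim_1:
  assumes "plane_arrangement P B" "T \<subseteq> B" "dim (P \<inter> \<Inter>T) = 1"
  shows "P \<inter> \<Inter>T \<in> plane_points P B"
proof -
  note P = plane_arrangementD[OF assms(1)]
  let ?W = "P \<inter> \<Inter>T"
  have "\<forall>H\<in>T. subspace H" using P(5) assms(2) subspace_linear_hyperplane by blast
  then have "subspace ?W" using P(1) by (simp add: subspace_inter subspace_Inter)
  have "T \<noteq> {}" using assms(3) P(2) by auto
  then obtain H1 where H1: "H1 \<in> T" by blast
  have X: "P \<inter> H1 \<in> plane_lines P B" using H1 assms(2) unfolding plane_lines_def by blast
  show ?thesis
  proof (cases "\<forall>H\<in>T. P \<inter> H = P \<inter> H1")
    case True
    then have "?W = P \<inter> H1" using H1 by blast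
    then show ?thesis using plane_line(2)[OF assms(1) X] assms(3) by simp
  next
    case False
    then obtain H2 where H2: "H2 \<in> T" "P \<inter> H2 \<noteq> P \<inter> H1" by blast
    have Y: "P \<inter> H2 \<in> plane_lines P B" using H2 assms(2) unfolding plane_lines_def by blast
    have "?W \<subseteq> (P \<inter> H1) \<inter> (P \<inter> H2)" using H1 H2 by blast
    then have "?W = (P \<inter> H1) \<inter> (P \<inter> H2)"
      using plane_point_eq_Int[OF assms(1) X Y H2(2)[symmetric] \<open>subspace ?W\<close> assms(3)] by blast
    then show ?thesis unfolding plane_points_def using X Y H2(2) by blast
  qed
qed

lemma point_degree_singleton: "point_degree P {H0} v \<le> 1"
proof -
  have "{X \<in> plane_lines P {H0}. v \<subseteq> X} \<subseteq> {P \<inter> H0}" unfolding plane_lines_def by auto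
  then show ?thesis unfolding point_degree_def using card_mono[of "{P \<inter> H0}"] by fastforce
qed

lemma point_degree_pos_iff:
  "finite C \<Longrightarrow> 1 \<le> point_degree P C v \<longleftrightarrow> (\<exists>X\<in>plane_lines P C. v \<subseteq> X)"
  unfolding point_degree_def using finite_plane_lines[of C P]
  by (auto simp: Suc_le_eq card_gt_0_iff)

lemma point_degree_ge_2:
  assumes "finite B" "v \<in> plane_points P B"
  shows "2 \<le> point_degree P B v"
proof -
  obtain X Y where XY: "X \<in> plane_lines P B" "Y \<in> plane_lines P B" "X \<noteq> Y" "v = X \<inter> Y"
    using assms(2) unfolding plane_points_def by blast
  then have "{X, Y} \<subseteq> {Z \<in> plane_lines P B. v \<subseteq> Z}" by blast
  then have "card {X, Y} \<le> point_degree P B v"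
    unfolding point_degree_def by (rule card_mono[rotated]) (simp add: finite_plane_lines[OF assms(1)])
  then show ?thesis using XY(3) by simp
qed

lemma point_degree_insert_new_line:
  assumes "finite C" "P \<inter> H0 \<notin> plane_lines P C"
  shows "point_degree P (insert H0 C) v = point_degree P C v + (if v \<subseteq> P \<inter> H0 then 1 else 0)"
proof -
  have "plane_lines P (insert H0 C) = insert (P \<inter> H0) (plane_lines P C)"
    unfolding plane_lines_def by simp
  then have "{X \<in> plane_lines P (insert H0 C). v \<subseteq> X} =
      (if v \<subseteq> P \<inter> H0 then insert (P \<inter> H0) else id) {X \<in> plane_lines P C. v \<subseteq> X}"
    by auto
  then show ?thesis
    unfolding point_degree_def using assms finite_plane_lines[OF assms(1)] by simp
qed

lemma points_on_new_line:
  assumes "plane_arrangement P B" "insert H0 C \<subseteq> B" "P \<inter> H0 \<notin> plane_lines P C"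
  shows "{v \<in> plane_points P B. v \<subseteq> P \<inter> H0 \<and> 1 \<le> point_degree P C v} = (\<lambda>H. P \<inter> H0 \<inter> H) ` C"
proof -
  have "finite C" using finite_subset[of C B] plane_arrangementD(4)[OF assms(1)] assms(2) by blast
  have X0: "P \<inter> H0 \<in> plane_lines P B" using assms(2) unfolding plane_lines_def by blast
  show ?thesis
  proof (intro equalityI subsetI)
    fix v assume "v \<in> {v \<in> plane_points P B. v \<subseteq> P \<inter> H0 \<and> 1 \<le> point_degree P C v}"
    then have v: "v \<in> plane_points P B" "v \<subseteq> P \<inter> H0" "\<exists>X\<in>plane_lines P C. v \<subseteq> X"
      using point_degree_pos_iff[OF \<open>finite C\<close>] by auto
    then obtain H where H: "H \<in> C" "v \<subseteq> P \<inter> H" unfolding plane_lines_def by blast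
    have X: "P \<inter> H \<in> plane_lines P B" using H(1) assms(2) unfolding plane_lines_def by blast
    have "P \<inter> H0 \<noteq> P \<inter> H" using assms(3) H(1) unfolding plane_lines_def by blast
    then have "v = (P \<inter> H0) \<inter> (P \<inter> H)"
      using plane_point_eq_Int[OF assms(1) X0 X] plane_point[OF assms(1) v(1)] v(2) H(2) by blast
    then show "v \<in> (\<lambda>H. P \<inter> H0 \<inter> H) ` C" using H(1) by blast
  next
    fix v assume "v \<in> (\<lambda>H. P \<inter> H0 \<inter> H) ` C"
    then obtain H where H: "H \<in> C" "v = P \<inter> H0 \<inter> H" by blast
    have X: "P \<inter> H \<in> plane_lines P B" and XC: "P \<inter> H \<in> plane_lines P C"
      using H(1) assms(2) unfolding plane_lines_def by blast+
    have "P \<inter> H0 \<noteq> P \<inter> H" using assms(3) XC by metis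
    moreover have "v = (P \<inter> H0) \<inter> (P \<inter> H)" using H(2) by blast
    ultimately have "v \<in> plane_points P B" unfolding plane_points_def using X0 X by blast
    moreover have "1 \<le> point_degree P C v"
      using point_degree_pos_iff[OF \<open>finite C\<close>] XC H(2) by blast
    ultimately show "v \<in> {v \<in> plane_points P B. v \<subseteq> P \<inter> H0 \<and> 1 \<le> point_degree P C v}"
      using H(2) by blast
  qed
qed

lemma sum_point_degree_insert_new_line:
  assumes "plane_arrangement P B" "insert H0 C \<subseteq> B" "P \<inter> H0 \<notin> plane_lines P C"
  shows "(\<Sum>v\<in>plane_points P B. point_degree P (insert H0 C) v - 1)
    = (\<Sum>v\<in>plane_points P B. point_degree P C v - 1) + card ((\<lambda>H. P \<inter> H0 \<inter> H) ` C)"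
proof -
  let ?U = "plane_points P B"
  have "finite C" using finite_subset[of C B] plane_arrangementD(4)[OF assms(1)] assms(2) by blast
  have "finite ?U" using finite_plane_points plane_arrangementD(4)[OF assms(1)] by blast
  have "(\<Sum>v\<in>?U. point_degree P (insert H0 C) v - 1) =
      (\<Sum>v\<in>?U. (point_degree P C v - 1) + (if v \<subseteq> P \<inter> H0 \<and> 1 \<le> point_degree P C v then 1 else 0))"
    by (rule sum.cong) (auto simp: point_degree_insert_new_line[OF \<open>finite C\<close> assms(3)])
  also have "\<dots> = (\<Sum>v\<in>?U. point_degree P C v - 1) +
      card {v \<in> ?U. v \<subseteq> P \<inter> H0 \<and> 1 \<le> point_degree P C v}"
    unfolding sum.distrib using sum.inter_filter[OF \<open>finite ?U\<close>, of "\<lambda>_. 1::nat"] by simp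
  finally show ?thesis unfolding points_on_new_line[OF assms] .
qed

lemma new_line_not_subset:
  assumes "plane_arrangement P (insert H0 C)" "P \<inter> H0 \<notin> plane_lines P C" "H \<in> C"
  shows "\<not> P \<inter> H0 \<subseteq> H"
proof
  assume "P \<inter> H0 \<subseteq> H"
  have "P \<inter> H0 \<in> plane_lines P (insert H0 C)" "P \<inter> H \<in> plane_lines P (insert H0 C)"
    using assms(3) unfolding plane_lines_def by blast+
  moreover have "P \<inter> H0 \<noteq> P \<inter> H" using assms(2,3) unfolding plane_lines_def by blast
  ultimately have "\<not> P \<inter> H0 \<subseteq> P \<inter> H" by (rule plane_lines_not_subset[OF assms(1)])
  then show False using \<open>P \<inter> H0 \<subseteq> H\<close> by blast
qed

text \<open>A new line through k old points adds at least 2 k regions, and exactly those k points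
  gain a line.\<close>

theorem card_regions_plane_ge:
  assumes "plane_arrangement P B" "C \<subseteq> B" "C \<noteq> {}"
  shows "2 + 2 * (\<Sum>v\<in>plane_points P B. point_degree P C v - 1) \<le> card (regions P C)"
proof -
  have "finite C" using finite_subset[OF assms(2) plane_arrangementD(4)[OF assms(1)]] .
  then show ?thesis using assms(3,2)
  proof (induction C rule: finite_ne_induct)
    case (singleton H0)
    note PA = plane_arrangementD[OF plane_arrangement_subset[OF assms(1) singleton]]
    have "card (regions P {H0}) = 2" using card_regions_singleton[OF PA(1) PA(5,6)[OF singletonI]] .
    moreover have "point_degree P {H0} v \<le> 1" for v by (rule point_degree_singleton)
    then have "(\<Sum>v\<in>plane_points P B. point_degree P {H0} v - 1) = 0" by simp
    ultimately show ?case by simp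
  next
    case (insert H0 C)
    have PA: "plane_arrangement P (insert H0 C)" using plane_arrangement_subset[OF assms(1) insert.prems] .
    note P = plane_arrangementD[OF PA]
    have IH: "2 + 2 * (\<Sum>v\<in>plane_points P B. point_degree P C v - 1) \<le> card (regions P C)"
      using insert.IH insert.prems by blast
    have DR: "card (regions P (insert H0 C)) = card (regions P C) + card (regions (P \<inter> H0) C)"
      using card_regions_insert[OF P(3) insert.hyps(3) P(1) P(6)] by simp
    show ?case
    proof (cases "P \<inter> H0 \<in> plane_lines P C")
      case True
      then have "plane_lines P (insert H0 C) = plane_lines P C" unfolding plane_lines_def by auto
      then have "point_degree P (insert H0 C) = point_degree P C"
        unfolding point_degree_def by (intro ext) simp
      then show ?thesis using IH DR by simp
    next
      case False
      have X0: "P \<inter> H0 \<in> plane_lines P (insert H0 C)" unfolding plane_lines_def by blast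
      have hC: "central_arrangement C" using P(3) unfolding central_arrangement_def by simp
      have "2 * card ((\<lambda>H. P \<inter> H0 \<inter> H) ` C) \<le> card (regions (P \<inter> H0) C)"
        using card_regions_line[OF hC plane_line(1,2)[OF PA X0]] new_line_not_subset[OF PA False]
        by blast
      then show ?thesis
        using IH DR sum_point_degree_insert_new_line[OF assms(1) insert.prems False] by simp
    qed
  qed
qed

lemma pencil_trace_on_new_line:
  assumes "plane_arrangement P (insert H0 C)" "P \<inter> H0 \<notin> plane_lines P C"
    and "u \<in> P \<inter> H0" "u \<noteq> 0" "H \<in> C" "u \<in> H"
  shows "P \<inter> H0 \<inter> H = span {u}"
proof (rule subspace_dim_1_eq)
  note P = plane_arrangementD[OF assms(1)]
  have X0: "P \<inter> H0 \<in> plane_lines P (insert H0 C)" unfolding plane_lines_def by blast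
  note X0_line = plane_line[OF assms(1) X0]
  show "subspace (P \<inter> H0 \<inter> H)"
    using X0_line(1) P(5) assms(5) by (simp add: subspace_inter subspace_linear_hyperplane)
  show "dim (P \<inter> H0 \<inter> H) = 1"
    using dim_Int_linear_hyperplane[OF X0_line(1) P(5) new_line_not_subset[OF assms(1,2,5)]]
      assms(5) X0_line(2) by simp
  show "u \<in> P \<inter> H0 \<inter> H" using assms(3,6) by blast
  show "subspace (span {u})" by (rule subspace_span)
  show "dim (span {u}) = 1" using assms(4) by simp
  show "u \<in> span {u}" by (rule span_base) simp
qed (rule assms(4))

theorem card_regions_pencil:
  assumes "plane_arrangement P C" "C \<noteq> {}" "u \<in> P" "u \<noteq> 0" "\<forall>H\<in>C. u \<in> H"
  shows "card (regions P C) \<le> 2 * card (plane_lines P C)"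
proof -
  have "finite C" using plane_arrangementD(4)[OF assms(1)] .
  then show ?thesis using assms(2,1,5)
  proof (induction C rule: finite_ne_induct)
    case (singleton H0)
    note P = plane_arrangementD[OF singleton.prems(1)]
    have "card (regions P {H0}) = 2" using card_regions_singleton[OF P(1) P(5,6)[OF singletonI]] .
    then show ?case unfolding plane_lines_def by simp
  next
    case (insert H0 C)
    note P = plane_arrangementD[OF insert.prems(1)]
    have PC: "plane_arrangement P C" using plane_arrangement_subset[OF insert.prems(1) subset_insertI] .
    have IH: "card (regions P C) \<le> 2 * card (plane_lines P C)"
      using insert.prems(2) by (intro insert.IH[OF PC]) simp
    have DR: "card (regions P (insert H0 C)) = card (regions P C) + card (regions (P \<inter> H0) C)"
      using card_regions_insert[OF P(3) insert.hyps(3) P(1) P(6)[OF insertI1]] .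
    have lines: "plane_lines P (insert H0 C) = insert (P \<inter> H0) (plane_lines P C)"
      unfolding plane_lines_def by simp
    show ?case
    proof (cases "P \<inter> H0 \<in> plane_lines P C")
      case True
      then obtain H where H: "P \<inter> H0 = P \<inter> H" "H \<in> C" unfolding plane_lines_def by (rule imageE)
      have "P \<inter> H0 \<subseteq> H" unfolding H(1) by blast
      then have "regions (P \<inter> H0) C = {}" unfolding regions_def using H(2) by blast
      then show ?thesis using IH DR lines True by (simp add: insert_absorb)
    next
      case False
      have X0: "P \<inter> H0 \<in> plane_lines P (insert H0 C)" unfolding plane_lines_def by blast
      note X0_line = plane_line[OF insert.prems(1) X0]
      have "P \<inter> H0 \<inter> H = span {u}" if "H \<in> C" for H
        using pencil_trace_on_new_line[OF insert.prems(1) False _ assms(4) that] assms(3) insert.prems(2) that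
        by blast
      have "central_arrangement C" using P(3) unfolding central_arrangement_def by simp
      then have "card (regions (P \<inter> H0) C) \<le> 2"
        using card_regions_common_trace[OF _ X0_line(1)] \<open>\<And>H. H \<in> C \<Longrightarrow> P \<inter> H0 \<inter> H = span {u}\<close>
        by blast
      moreover have "card (plane_lines P (insert H0 C)) = card (plane_lines P C) + 1"
        using lines False finite_plane_lines[OF insert.hyps(1)] by simp
      ultimately show ?thesis using IH DR by simp
    qed
  qed
qed

section \<open>Corners of regions and Melchior's inequality\<close>

definition region_cone :: "'a::euclidean_space set \<Rightarrow> 'a set set \<Rightarrow> ('a set \<Rightarrow> real) \<Rightarrow> 'a set" where
  "region_cone S B \<sigma> = {x \<in> S. \<forall>H\<in>B. 0 \<le> \<sigma> H * (normal H \<bullet> x)}"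

lemma region_cone_eq_halfspaces:
  "region_cone S B \<sigma> = S \<inter> (\<Inter>H\<in>B. {x. 0 \<le> (\<sigma> H *\<^sub>R normal H) \<bullet> x})"
  unfolding region_cone_def by auto

lemma closed_region_cone: "subspace S \<Longrightarrow> closed (region_cone S B \<sigma>)"
  unfolding region_cone_eq_halfspaces
  by (intro closed_Int closed_subspace closed_INT ballI closed_halfspace_ge)

lemma convex_region_cone: "subspace S \<Longrightarrow> convex (region_cone S B \<sigma>)"
  unfolding region_cone_eq_halfspaces
  by (intro convex_Int subspace_imp_convex convex_INT ballI convex_halfspace_ge)

lemma region_cone_scale:
  assumes "subspace S" "x \<in> region_cone S B \<sigma>" "0 \<le> t"
  shows "t *\<^sub>R x \<in> region_cone S B \<sigma>"
proof -
  have "0 \<le> \<sigma> H * (normal H \<bullet> (t *\<^sub>R x))" if "H \<in> B" for H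
  proof -
    have "0 \<le> t * (\<sigma> H * (normal H \<bullet> x))" using assms(2,3) that unfolding region_cone_def by simp
    then show ?thesis by (simp add: algebra_simps)
  qed
  then show ?thesis using assms(1,2) unfolding region_cone_def by (simp add: subspace_scale)
qed

lemma sign_vector_in_region_cone: "x \<in> S \<Longrightarrow> x \<in> region_cone S B (sign_vector B x)"
  unfolding region_cone_def sign_vector_def by (auto simp: sgn_if)

lemma region_value_forced:
  assumes "central_arrangement B" "\<sigma> \<in> regions S B" "u \<in> region_cone S B \<sigma>" "H \<in> B" "u \<notin> H"
  shows "\<sigma> H = sgn (normal H \<bullet> u)"
proof -
  have hH: "linear_hyperplane H" using assms(1,4) unfolding central_arrangement_def by blast
  obtain x where x: "\<sigma> = sign_vector B x" "x \<in> S - \<Union>B" using assms(2) unfolding regions_def by blast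
  have "x \<notin> H" using x(2) assms(4) by blast
  then have "\<sigma> H = 1 \<or> \<sigma> H = -1" unfolding x(1) by (rule sign_vector_in_units[OF hH assms(4)])
  moreover have "normal H \<bullet> u \<noteq> 0" using assms(5) mem_linear_hyperplane[OF hH] by blast
  moreover have "0 \<le> \<sigma> H * (normal H \<bullet> u)" using assms(3,4) unfolding region_cone_def by blast
  ultimately show ?thesis by (rule sgn_eq_if_nonneg_mult)
qed

lemma card_regions_containing:
  assumes "central_arrangement B"
  shows "card {\<sigma> \<in> regions S B. u \<in> region_cone S B \<sigma>} \<le> card (regions S {H \<in> B. u \<in> H})"
proof -
  let ?Bu = "{H \<in> B. u \<in> H}"
  have "inj_on (\<lambda>\<sigma>. restrict \<sigma> ?Bu) {\<sigma> \<in> regions S B. u \<in> region_cone S B \<sigma>}"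
  proof (rule inj_onI)
    fix \<sigma> \<tau> assume \<sigma>: "\<sigma> \<in> {\<sigma> \<in> regions S B. u \<in> region_cone S B \<sigma>}"
      and \<tau>: "\<tau> \<in> {\<sigma> \<in> regions S B. u \<in> region_cone S B \<sigma>}"
      and eq: "restrict \<sigma> ?Bu = restrict \<tau> ?Bu"
    have \<sigma>R: "\<sigma> \<in> regions S B" and \<tau>R: "\<tau> \<in> regions S B" using \<sigma> \<tau> by blast+
    show "\<sigma> = \<tau>"
    proof
      fix H
      consider "H \<notin> B" | "H \<in> B" "u \<in> H" | "H \<in> B" "u \<notin> H" by blast
      then show "\<sigma> H = \<tau> H"
      proof cases
        case 1
        then show ?thesis
          using fun_cong[OF restrict_region[OF \<sigma>R], of H] fun_cong[OF restrict_region[OF \<tau>R], of H]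
          by simp
      next
        case 2
        then show ?thesis using fun_cong[OF eq, of H] by simp
      next
        case 3
        then show ?thesis
          using region_value_forced[OF assms \<sigma>R _ 3] region_value_forced[OF assms \<tau>R _ 3] \<sigma> \<tau> by simp
      qed
    qed
  qed
  moreover have "(\<lambda>\<sigma>. restrict \<sigma> ?Bu) ` {\<sigma> \<in> regions S B. u \<in> region_cone S B \<sigma>} \<subseteq> regions S ?Bu"
  proof
    fix \<rho> assume "\<rho> \<in> (\<lambda>\<sigma>. restrict \<sigma> ?Bu) ` {\<sigma> \<in> regions S B. u \<in> region_cone S B \<sigma>}"
    then obtain x where x: "\<rho> = restrict (sign_vector B x) ?Bu" "x \<in> S - \<Union>B"
      unfolding regions_def by blast
    then have "\<rho> = sign_vector ?Bu x" unfolding sign_vector_def by (auto simp: restrict_def)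
    moreover have "x \<in> S - \<Union>?Bu" using x(2) by blast
    ultimately show "\<rho> \<in> regions S ?Bu" unfolding regions_def by blast
  qed
  moreover have "finite (regions S ?Bu)"
    using assms unfolding central_arrangement_def by (simp add: finite_regions)
  ultimately show ?thesis by (rule card_inj_on_le)
qed

definition corners :: "'a::euclidean_space set \<Rightarrow> 'a set set \<Rightarrow> ('a set \<Rightarrow> real) \<Rightarrow> 'a set set" where
  "corners P B \<sigma> = {v \<in> plane_points P B. \<exists>u\<in>v. u \<noteq> 0 \<and> u \<in> region_cone P B \<sigma>}"

lemma corner_ray_in_region_cone:
  assumes "subspace P" "v \<in> corners P B \<sigma>" "v = span {u}"
  shows "u \<in> region_cone P B \<sigma> \<or> -u \<in> region_cone P B \<sigma>"
proof -
  obtain w where w: "w \<in> v" "w \<noteq> 0" "w \<in> region_cone P B \<sigma>" using assms(2) unfolding corners_def by blast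
  obtain k where k: "w = k *\<^sub>R u" using w(1) assms(3) unfolding span_singleton by blast
  then have "k \<noteq> 0" using w(2) by auto
  show ?thesis
  proof (cases "k > 0")
    case True
    have "u = (1 / k) *\<^sub>R w" using k \<open>k \<noteq> 0\<close> by simp
    then show ?thesis using region_cone_scale[OF assms(1) w(3), of "1 / k"] True by simp
  next
    case False
    have "-u = (-1 / k) *\<^sub>R w" using k \<open>k \<noteq> 0\<close> by simp
    then show ?thesis using region_cone_scale[OF assms(1) w(3), of "-1 / k"] False by simp
  qed
qed

lemma card_regions_through_point:
  assumes "plane_arrangement P B" "v \<in> plane_points P B" "u \<noteq> 0" "u \<in> v" "v = span {u}"
  shows "card (regions P {H \<in> B. u \<in> H}) \<le> 2 * point_degree P B v"
proof -
  note P = plane_arrangementD[OF assms(1)]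
  let ?Bu = "{H \<in> B. u \<in> H}"
  have in_iff: "u \<in> H \<longleftrightarrow> v \<subseteq> P \<inter> H" if "H \<in> B" for H
  proof
    assume "u \<in> H"
    then have "span {u} \<subseteq> H" using span_minimal subspace_linear_hyperplane[OF P(5)[OF that]] by blast
    then show "v \<subseteq> P \<inter> H" using assms(5) plane_point(3)[OF assms(1,2)] by blast
  qed (use assms(4) in blast)
  have lines_u: "plane_lines P ?Bu = {X \<in> plane_lines P B. v \<subseteq> X}"
    unfolding plane_lines_def using in_iff by auto
  obtain X Y where "X \<in> plane_lines P B" "v = X \<inter> Y" using assms(2) unfolding plane_points_def by blast
  then obtain H1 where "H1 \<in> B" "v \<subseteq> P \<inter> H1" unfolding plane_lines_def by blast
  then have "?Bu \<noteq> {}" using in_iff by blast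
  then have "card (regions P ?Bu) \<le> 2 * card (plane_lines P ?Bu)"
    by (rule card_regions_pencil[OF plane_arrangement_subset[OF assms(1) Collect_subset] _ _ assms(3)])
      (use assms(4) plane_point(3)[OF assms(1,2)] in auto)
  then show ?thesis unfolding point_degree_def lines_u .
qed

text \<open>The regions with corner v contain one of the two rays of v in their closed cone, and
  the regions around a ray are regions of the pencil of lines through v.\<close>

lemma card_regions_at_point:
  assumes "plane_arrangement P B" "v \<in> plane_points P B"
  shows "card {\<sigma> \<in> regions P B. v \<in> corners P B \<sigma>} \<le> 4 * point_degree P B v"
proof -
  note P = plane_arrangementD[OF assms(1)]
  obtain u where u: "u \<noteq> 0" "u \<in> v" "v = span {u}"
    using subspace_dim_1_obtain_span[OF plane_point(1,2)[OF assms]] .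
  have "-u \<in> H \<longleftrightarrow> u \<in> H" if "H \<in> B" for H
    using subspace_neg[OF subspace_linear_hyperplane[OF P(5)[OF that]], of u]
      subspace_neg[OF subspace_linear_hyperplane[OF P(5)[OF that]], of "-u"] by auto
  then have neg: "{H \<in> B. -u \<in> H} = {H \<in> B. u \<in> H}" by blast
  have "{\<sigma> \<in> regions P B. v \<in> corners P B \<sigma>} \<subseteq>
      {\<sigma> \<in> regions P B. u \<in> region_cone P B \<sigma>} \<union> {\<sigma> \<in> regions P B. -u \<in> region_cone P B \<sigma>}"
    using corner_ray_in_region_cone[OF P(1) _ u(3)] by blast
  then have "card {\<sigma> \<in> regions P B. v \<in> corners P B \<sigma>} \<le>
      card ({\<sigma> \<in> regions P B. u \<in> region_cone P B \<sigma>} \<union> {\<sigma> \<in> regions P B. -u \<in> region_cone P B \<sigma>})"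
    by (rule card_mono[rotated]) (simp add: finite_regions[OF P(4)])
  also have "\<dots> \<le>
      card {\<sigma> \<in> regions P B. u \<in> region_cone P B \<sigma>} + card {\<sigma> \<in> regions P B. -u \<in> region_cone P B \<sigma>}"
    by (rule card_Un_le)
  also have "\<dots> \<le> 2 * card (regions P {H \<in> B. u \<in> H})"
    using card_regions_containing[OF P(3), of P u] card_regions_containing[OF P(3), of P "-u"] neg
    by simp
  finally show ?thesis using card_regions_through_point[OF assms u] by simp
qed

lemma compact_cone_slice:
  fixes C :: "'a::euclidean_space set"
  assumes "closed C" "\<And>x t. x \<in> C \<Longrightarrow> 0 \<le> t \<Longrightarrow> t *\<^sub>R x \<in> C"
    and "\<And>x. x \<in> C \<Longrightarrow> x \<noteq> 0 \<Longrightarrow> 0 < c \<bullet> x"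
  shows "compact (C \<inter> {x. c \<bullet> x = 1})"
proof -
  let ?K = "C \<inter> {x. c \<bullet> x = 1}" and ?S = "C \<inter> sphere 0 1"
  have normalize: "(1 / norm x) *\<^sub>R x \<in> ?S" if "x \<in> C" "x \<noteq> 0" for x
    using assms(2)[OF that(1)] that(2) by simp
  have "bounded ?K"
  proof (cases "?S = {}")
    case True
    then have "?K \<subseteq> {0}" using normalize by blast
    then show ?thesis by (meson bounded_empty bounded_insert bounded_subset)
  next
    case False
    have "compact ?S" using assms(1) by (intro closed_Int_compact compact_sphere)
    moreover have "continuous_on ?S (\<lambda>x. c \<bullet> x)" by (intro continuous_intros)
    ultimately obtain p where p: "p \<in> ?S" "\<And>y. y \<in> ?S \<Longrightarrow> c \<bullet> p \<le> c \<bullet> y"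
      using continuous_attains_inf[OF _ False] by blast
    have "0 < c \<bullet> p" using assms(3) p(1) by fastforce
    have "norm x \<le> 1 / (c \<bullet> p)" if "x \<in> ?K" for x
    proof -
      have "x \<noteq> 0" using that by auto
      then have "c \<bullet> p \<le> c \<bullet> ((1 / norm x) *\<^sub>R x)" using p(2) normalize that by blast
      also have "\<dots> = 1 / norm x" using that by simp
      finally show ?thesis using \<open>0 < c \<bullet> p\<close> \<open>x \<noteq> 0\<close> by (simp add: field_simps)
    qed
    then show ?thesis unfolding bounded_iff by blast
  qed
  moreover have "closed ?K" using assms(1) by (intro closed_Int closed_hyperplane)
  ultimately show ?thesis by (simp add: compact_eq_bounded_closed)
qed

lemma three_extreme_points:
  fixes K :: "'a::euclidean_space set"
  assumes "compact K" "convex K" "x \<in> K" "subspace D" "2 \<le> dim D"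
    and "\<And>d. d \<in> D \<Longrightarrow> \<exists>e>0. x + e *\<^sub>R d \<in> K"
  obtains e1 e2 e3 where "e1 extreme_point_of K" "e2 extreme_point_of K" "e3 extreme_point_of K"
    "e1 \<noteq> e2" "e1 \<noteq> e3" "e2 \<noteq> e3"
proof (rule ccontr)
  let ?E = "{e. e extreme_point_of K}"
  assume "\<not> thesis"
  then have "\<not> (\<exists>e1\<in>?E. \<exists>e2\<in>?E. \<exists>e3\<in>?E. e1 \<noteq> e2 \<and> e1 \<noteq> e3 \<and> e2 \<noteq> e3)" using that by blast
  then obtain p q where "?E \<subseteq> {p, q}" by (metis insertCI subsetI)
  then have Kseg: "K \<subseteq> closed_segment p q"
    using Krein_Milman_Minkowski[OF assms(1,2)] hull_mono[of ?E "{p, q}" convex]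
    by (simp add: segment_convex_hull)
  have "D \<subseteq> span {q - p}"
  proof
    fix d assume "d \<in> D"
    then obtain e where "e > 0" "x + e *\<^sub>R d \<in> K" using assms(6) by blast
    then obtain a b where ab: "x = (1 - a) *\<^sub>R p + a *\<^sub>R q" "x + e *\<^sub>R d = (1 - b) *\<^sub>R p + b *\<^sub>R q"
      using Kseg assms(3) unfolding closed_segment_def by blast
    have "e *\<^sub>R d = (x + e *\<^sub>R d) - x" by simp
    also have "\<dots> = ((1 - b) *\<^sub>R p + b *\<^sub>R q) - ((1 - a) *\<^sub>R p + a *\<^sub>R q)" using ab by simp
    also have "\<dots> = (b - a) *\<^sub>R (q - p)" by (simp add: algebra_simps)
    finally have "e *\<^sub>R d = (b - a) *\<^sub>R (q - p)" .
    then have "(1 / e) *\<^sub>R (e *\<^sub>R d) = (1 / e) *\<^sub>R ((b - a) *\<^sub>R (q - p))" by simp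
    then have "d = ((b - a) / e) *\<^sub>R (q - p)" using \<open>e > 0\<close> by simp
    then show "d \<in> span {q - p}" by (simp add: span_clauses(1) span_mul)
  qed
  then have "dim D \<le> dim (span {q - p})" by (rule dim_subset)
  also have "\<dots> \<le> 1" by simp
  finally show False using assms(5) by simp
qed

lemma extreme_point_symmetric_directions:
  fixes e d :: "'a::euclidean_space"
  assumes "e extreme_point_of K" "e + t *\<^sub>R d \<in> K" "e + (-t) *\<^sub>R d \<in> K" "t \<noteq> 0"
  shows "d = 0"
proof (rule ccontr)
  assume "d \<noteq> 0"
  have "e + t *\<^sub>R d \<noteq> e + (-t) *\<^sub>R d"
  proof
    assume "e + t *\<^sub>R d = e + (-t) *\<^sub>R d"
    then have "t *\<^sub>R d + t *\<^sub>R d = 0" by (simp add: eq_neg_iff_add_eq_0)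
    then have "(t + t) *\<^sub>R d = 0" by (simp only: scaleR_left_distrib)
    then show False using \<open>d \<noteq> 0\<close> assms(4) by simp
  qed
  moreover have "(e + t *\<^sub>R d) + (e + (-t) *\<^sub>R d) = 2 *\<^sub>R e" by (simp add: scaleR_2)
  then have "midpoint (e + t *\<^sub>R d) (e + (-t) *\<^sub>R d) = e" unfolding midpoint_def by simp
  ultimately have "e \<in> open_segment (e + t *\<^sub>R d) (e + (-t) *\<^sub>R d)"
    using midpoint_in_open_segment by metis
  then show False using assms(1-3) unfolding extreme_point_of_def by blast
qed

lemma same_span_on_slice:
  fixes a b c :: "'a::euclidean_space"
  assumes "c \<bullet> a = 1" "c \<bullet> b = 1" "span {a} = span {b}"
  shows "a = b"
proof -
  have "b \<in> span {a}" using assms(3) span_base[of b "{b}"] by simp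
  then obtain k where "b = k *\<^sub>R a" unfolding span_singleton by blast
  moreover have "k = 1" using assms(1,2) calculation by simp
  ultimately show ?thesis by simp
qed

lemma region_cone_perturbation:
  assumes "plane_arrangement P B" "e \<in> region_cone P B \<sigma>" "d \<in> P" "\<And>H. H \<in> B \<Longrightarrow> e \<in> H \<Longrightarrow> d \<in> H"
  obtains \<epsilon> where "\<epsilon> > 0" "\<And>t. \<bar>t\<bar> \<le> \<epsilon> \<Longrightarrow> e + t *\<^sub>R d \<in> region_cone P B \<sigma>"
proof -
  note P = plane_arrangementD[OF assms(1)]
  let ?T = "{H \<in> B. e \<in> H}"
  have "central_arrangement (B - ?T)" using P(3) unfolding central_arrangement_def by auto
  moreover have "e \<notin> \<Union>(B - ?T)" by blast
  ultimately obtain \<epsilon> where "\<epsilon> > 0"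
    and \<epsilon>: "\<And>t. \<bar>t\<bar> \<le> \<epsilon> \<Longrightarrow> sign_vector (B - ?T) (e + t *\<^sub>R d) = sign_vector (B - ?T) e"
    by (rule sign_vector_locally_constant[where d = d]) blast
  have "e + t *\<^sub>R d \<in> region_cone P B \<sigma>" if "\<bar>t\<bar> \<le> \<epsilon>" for t
  proof -
    have "e + t *\<^sub>R d \<in> P" using assms(2,3) P(1) unfolding region_cone_def
      by (simp add: subspace_add subspace_scale)
    moreover have "0 \<le> \<sigma> H * (normal H \<bullet> (e + t *\<^sub>R d))" if "H \<in> B" for H
    proof (cases "e \<in> H")
      case True
      then have "normal H \<bullet> (e + t *\<^sub>R d) = 0"
        using assms(4)[OF that] mem_linear_hyperplane[OF P(5)[OF that]] by (simp add: inner_add_right)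
      then show ?thesis by simp
    next
      case False
      then have "sgn (normal H \<bullet> (e + t *\<^sub>R d)) = sgn (normal H \<bullet> e)"
        using fun_cong[OF \<epsilon>[OF \<open>\<bar>t\<bar> \<le> \<epsilon>\<close>], of H] that unfolding sign_vector_def by simp
      moreover have "0 \<le> \<sigma> H * (normal H \<bullet> e)" using assms(2) that unfolding region_cone_def by blast
      ultimately show ?thesis using nonneg_mult_if_sgn_eq by blast
    qed
    ultimately show ?thesis unfolding region_cone_def by blast
  qed
  with \<open>\<epsilon> > 0\<close> that show ?thesis by blast
qed

lemma region_cone_functional_pos:
  assumes "plane_arrangement P B" "P \<inter> \<Inter>B = {0}" "\<sigma> \<in> regions P B"
    and "x \<in> region_cone P B \<sigma>" "x \<noteq> 0"
  shows "0 < (\<Sum>H\<in>B. \<sigma> H *\<^sub>R normal H) \<bullet> x"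
proof -
  note P = plane_arrangementD[OF assms(1)]
  have terms: "0 \<le> \<sigma> H * (normal H \<bullet> x)" if "H \<in> B" for H
    using assms(4) that unfolding region_cone_def by blast
  have eq: "(\<Sum>H\<in>B. \<sigma> H *\<^sub>R normal H) \<bullet> x = (\<Sum>H\<in>B. \<sigma> H * (normal H \<bullet> x))"
    by (simp add: inner_sum_left)
  have "(\<Sum>H\<in>B. \<sigma> H * (normal H \<bullet> x)) \<noteq> 0"
  proof
    assume "(\<Sum>H\<in>B. \<sigma> H * (normal H \<bullet> x)) = 0"
    then have zero: "\<forall>H\<in>B. \<sigma> H * (normal H \<bullet> x) = 0"
      using sum_nonneg_eq_0_iff[OF P(4) terms] by simp
    have "x \<in> H" if "H \<in> B" for H
    proof -
      obtain y where "\<sigma> = sign_vector B y" "y \<in> P - \<Union>B" using assms(3) unfolding regions_def by blast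
      moreover have "y \<notin> H" using \<open>y \<in> P - \<Union>B\<close> that by blast
      ultimately have "\<sigma> H \<noteq> 0" using sign_vector_in_units[OF P(5)[OF that] that, of y] by auto
      moreover have "\<sigma> H * (normal H \<bullet> x) = 0" using zero that by blast
      ultimately show ?thesis using mem_linear_hyperplane[OF P(5)[OF that]] by simp
    qed
    then have "x \<in> P \<inter> \<Inter>B" using assms(4) unfolding region_cone_def by blast
    then show False using assms(2,5) by blast
  qed
  moreover have "0 \<le> (\<Sum>H\<in>B. \<sigma> H * (normal H \<bullet> x))" by (rule sum_nonneg) (rule terms)
  ultimately show ?thesis using eq by simp
qed

lemma region_slice_point:
  assumes "plane_arrangement P B" "P \<inter> \<Inter>B = {0}" "\<sigma> \<in> regions P B"
  obtains x where "x \<in> P - \<Union>B" "sign_vector B x = \<sigma>" "(\<Sum>H\<in>B. \<sigma> H *\<^sub>R normal H) \<bullet> x = 1"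
proof -
  note P = plane_arrangementD[OF assms(1)]
  let ?c = "\<Sum>H\<in>B. \<sigma> H *\<^sub>R normal H"
  obtain x0 where x0: "\<sigma> = sign_vector B x0" "x0 \<in> P - \<Union>B"
    using assms(3) unfolding regions_def by blast
  have "B \<noteq> {}" using assms(2) P(2) by auto
  then have "x0 \<noteq> 0" using x0(2) P(5) subspace_0[OF subspace_linear_hyperplane] by blast
  moreover have "x0 \<in> region_cone P B \<sigma>" using sign_vector_in_region_cone[of x0 P B] x0 by simp
  ultimately have "0 < ?c \<bullet> x0" using region_cone_functional_pos[OF assms] by blast
  define x where "x = (1 / (?c \<bullet> x0)) *\<^sub>R x0"
  have "sign_vector B x = \<sigma>" "x \<in> P" "?c \<bullet> x = 1"
    unfolding x_def using x0 \<open>0 < ?c \<bullet> x0\<close> P(1) by (simp_all add: sign_vector_scale subspace_scale)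
  moreover have "x \<notin> \<Union>B"
    by (rule sign_vector_eq_imp_not_in_Union[OF P(3) calculation(1)[unfolded x0(1)]]) (use x0 in blast)
  ultimately show ?thesis using that by blast
qed

lemma extreme_point_spans_plane_point:
  assumes "plane_arrangement P B" "e extreme_point_of (region_cone P B \<sigma> \<inter> {x. c \<bullet> x = 1})"
  shows "span {e} \<in> plane_points P B"
proof -
  note P = plane_arrangementD[OF assms(1)]
  let ?K = "region_cone P B \<sigma> \<inter> {x. c \<bullet> x = 1}"
  have e: "e \<in> region_cone P B \<sigma>" "c \<bullet> e = 1" using assms(2) unfolding extreme_point_of_def by auto
  then have "e \<noteq> 0" "e \<in> P" unfolding region_cone_def by auto
  define T where "T = {H \<in> B. e \<in> H}"
  define W where "W = P \<inter> \<Inter>T"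
  have "\<forall>H\<in>T. subspace H" using P(5) subspace_linear_hyperplane unfolding T_def by blast
  then have "subspace W" unfolding W_def using P(1) by (simp add: subspace_inter subspace_Inter)
  have "e \<in> W" unfolding W_def T_def using \<open>e \<in> P\<close> by blast
  have "W \<subseteq> span {e}"
  proof
    fix w assume "w \<in> W"
    define d where "d = w - (c \<bullet> w) *\<^sub>R e"
    have "d \<in> W" unfolding d_def using \<open>subspace W\<close> \<open>w \<in> W\<close> \<open>e \<in> W\<close>
      by (simp add: subspace_diff subspace_scale)
    have "c \<bullet> d = 0" unfolding d_def using e(2) by (simp add: inner_diff_right)
    obtain \<epsilon> where "\<epsilon> > 0" and \<epsilon>: "\<And>t. \<bar>t\<bar> \<le> \<epsilon> \<Longrightarrow> e + t *\<^sub>R d \<in> region_cone P B \<sigma>"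
      using region_cone_perturbation[OF assms(1) e(1)] \<open>d \<in> W\<close> unfolding W_def T_def by blast
    have Kd: "e + t *\<^sub>R d \<in> ?K" if "\<bar>t\<bar> \<le> \<epsilon>" for t
      using \<epsilon>[OF that] e(2) \<open>c \<bullet> d = 0\<close> by (simp add: inner_add_right)
    have "e + \<epsilon> *\<^sub>R d \<in> ?K" "e + (-\<epsilon>) *\<^sub>R d \<in> ?K"
      using Kd[of \<epsilon>] Kd[of "-\<epsilon>"] \<open>\<epsilon> > 0\<close> by simp_all
    then have "d = 0" using extreme_point_symmetric_directions[OF assms(2)] \<open>\<epsilon> > 0\<close> by simp
    then have "w = (c \<bullet> w) *\<^sub>R e" unfolding d_def by simp
    then show "w \<in> span {e}" by (metis span_base span_mul singletonI)
  qed
  moreover have "span {e} \<subseteq> W" using \<open>e \<in> W\<close> \<open>subspace W\<close> by (simp add: span_minimal)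
  ultimately have "W = span {e}" by blast
  then have "dim W = 1" using \<open>e \<noteq> 0\<close> by simp
  then show ?thesis
    using plane_point_if_dim_1[OF assms(1), of T] \<open>W = span {e}\<close> unfolding W_def T_def by auto
qed

lemma extreme_point_corner:
  assumes "plane_arrangement P B" "e extreme_point_of (region_cone P B \<sigma> \<inter> {x. c \<bullet> x = 1})"
  shows "span {e} \<in> corners P B \<sigma>"
proof -
  have e: "e \<in> region_cone P B \<sigma>" "c \<bullet> e = 1" using assms(2) unfolding extreme_point_of_def by auto
  then have "e \<noteq> 0" by auto
  then show ?thesis
    unfolding corners_def using extreme_point_spans_plane_point[OF assms] e(1) span_base[of e "{e}"] by blast
qed

text \<open>As P meets the hyperplanes only in 0, the functional c below is positive on the closed
  cone of the region, so the slice c x = 1 is a compact convex polygon spanning a plane. Its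
  extreme points lie on distinct points of the arrangement.\<close>

theorem card_corners_ge_3:
  assumes "plane_arrangement P B" "P \<inter> \<Inter>B = {0}" "\<sigma> \<in> regions P B"
  shows "3 \<le> card (corners P B \<sigma>)"
proof -
  note P = plane_arrangementD[OF assms(1)]
  define c where "c = (\<Sum>H\<in>B. \<sigma> H *\<^sub>R normal H)"
  define K where "K = region_cone P B \<sigma> \<inter> {x. c \<bullet> x = 1}"
  have cpos: "0 < c \<bullet> x" if "x \<in> region_cone P B \<sigma>" "x \<noteq> 0" for x
    unfolding c_def by (rule region_cone_functional_pos[OF assms that])
  have "compact K" unfolding K_def
    by (rule compact_cone_slice[OF closed_region_cone[OF P(1)] region_cone_scale[OF P(1)] cpos])
  have "convex K" unfolding K_def by (intro convex_Int convex_region_cone[OF P(1)] convex_hyperplane)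
  obtain x where x: "x \<in> P - \<Union>B" "sign_vector B x = \<sigma>" "c \<bullet> x = 1"
    using region_slice_point[OF assms] unfolding c_def by blast
  have x_cone: "x \<in> region_cone P B \<sigma>" using sign_vector_in_region_cone[of x P B] x by simp
  then have "x \<in> K" using x(3) unfolding K_def by blast
  define D where "D = P \<inter> {y. c \<bullet> y = 0}"
  have "c \<noteq> 0" using x(3) by auto
  then have "linear_hyperplane {y. c \<bullet> y = 0}" unfolding linear_hyperplane_def by blast
  moreover have "\<not> P \<subseteq> {y. c \<bullet> y = 0}" using x(1,3) by auto
  ultimately have "dim D = 2" using dim_Int_linear_hyperplane[OF P(1)] P(2) unfolding D_def by simp
  have "subspace D" unfolding D_def using P(1) subspace_hyperplane by (rule subspace_inter)
  have dirs: "\<exists>\<epsilon>>0. x + \<epsilon> *\<^sub>R d \<in> K" if d: "d \<in> D" for d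
  proof -
    obtain \<epsilon> where "\<epsilon> > 0" "\<And>t. \<bar>t\<bar> \<le> \<epsilon> \<Longrightarrow> x + t *\<^sub>R d \<in> region_cone P B \<sigma>"
      by (rule region_cone_perturbation[OF assms(1) x_cone, of d]) (use d x(1) in \<open>auto simp: D_def\<close>)
    moreover have "c \<bullet> (x + \<epsilon> *\<^sub>R d) = 1" using x(3) d unfolding D_def by (simp add: inner_add_right)
    ultimately show ?thesis unfolding K_def by force
  qed
  obtain e1 e2 e3 where e: "e1 extreme_point_of K" "e2 extreme_point_of K" "e3 extreme_point_of K"
    and distinct: "e1 \<noteq> e2" "e1 \<noteq> e3" "e2 \<noteq> e3"
    using three_extreme_points[OF \<open>compact K\<close> \<open>convex K\<close> \<open>x \<in> K\<close> \<open>subspace D\<close> _ dirs] \<open>dim D = 2\<close>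
    by auto
  have "c \<bullet> e = 1" if "e extreme_point_of K" for e
    using that unfolding K_def extreme_point_of_def by auto
  then have "span {e1} \<noteq> span {e2}" "span {e1} \<noteq> span {e3}" "span {e2} \<noteq> span {e3}"
    using same_span_on_slice e distinct by metis+
  then have "card {span {e1}, span {e2}, span {e3}} = 3" by simp
  moreover have "{span {e1}, span {e2}, span {e3}} \<subseteq> corners P B \<sigma>"
    using extreme_point_corner[OF assms(1)] e unfolding K_def by blast
  moreover have "finite (corners P B \<sigma>)"
    using finite_plane_points[OF P(4)] unfolding corners_def by simp
  ultimately show ?thesis by (metis card_mono)
qed

theorem melchior_inequality:
  assumes "plane_arrangement P B" "P \<inter> \<Inter>B = {0}"
  shows "3 + (\<Sum>v\<in>plane_points P B. point_degree P B v) \<le> 3 * card (plane_points P B)"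
proof -
  note P = plane_arrangementD[OF assms(1)]
  let ?R = "regions P B" and ?U = "plane_points P B"
  have fin: "finite ?R" "finite ?U" using P(4) by (simp_all add: finite_regions finite_plane_points)
  have "B \<noteq> {}" using assms(2) P(2) by auto
  have "(\<Sum>v\<in>?U. point_degree P B v - 1) + card ?U = (\<Sum>v\<in>?U. (point_degree P B v - 1) + 1)"
    by (simp only: sum.distrib) simp
  also have "\<dots> = (\<Sum>v\<in>?U. point_degree P B v)"
  proof (rule sum.cong[OF refl])
    fix v assume "v \<in> ?U"
    then show "point_degree P B v - 1 + 1 = point_degree P B v"
      using point_degree_ge_2[OF P(4) \<open>v \<in> ?U\<close>] by simp
  qed
  finally have excess: "(\<Sum>v\<in>?U. point_degree P B v - 1) + card ?U = (\<Sum>v\<in>?U. point_degree P B v)" .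
  have lower: "2 + 2 * (\<Sum>v\<in>?U. point_degree P B v - 1) \<le> card ?R"
    by (rule card_regions_plane_ge[OF assms(1) order_refl \<open>B \<noteq> {}\<close>])
  have "3 * card ?R = (\<Sum>\<sigma>\<in>?R. 3)" by simp
  also have "\<dots> \<le> (\<Sum>\<sigma>\<in>?R. card {v \<in> ?U. v \<in> corners P B \<sigma>})"
  proof (rule sum_mono)
    fix \<sigma> assume "\<sigma> \<in> ?R"
    have "{v \<in> ?U. v \<in> corners P B \<sigma>} = corners P B \<sigma>" unfolding corners_def by blast
    then show "3 \<le> card {v \<in> ?U. v \<in> corners P B \<sigma>}"
      using card_corners_ge_3[OF assms \<open>\<sigma> \<in> ?R\<close>] by simp
  qed
  also have "\<dots> = (\<Sum>v\<in>?U. card {\<sigma> \<in> ?R. v \<in> corners P B \<sigma>})"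
    by (rule sum_multicount_gen[OF fin]) simp
  also have "\<dots> \<le> (\<Sum>v\<in>?U. 4 * point_degree P B v)"
    by (rule sum_mono) (rule card_regions_at_point[OF assms(1)])
  finally have upper: "3 * card ?R \<le> 4 * (\<Sum>v\<in>?U. point_degree P B v)"
    by (simp add: sum_distrib_left)
  show ?thesis using lower upper excess by linarith
qed

section \<open>Arrangements in projective three-space\<close>

lemma arrangementD:
  assumes "arrangement A"
  shows "finite A" "\<And>H. H \<in> A \<Longrightarrow> lin_hyperplane H" "\<Inter>A = {0}"
  using assms unfolding arrangement_def by auto

lemma plane_arrangement_of_arrangement:
  assumes "arrangement A" "H \<in> A"
  shows "plane_arrangement H (A - {H})" "H \<inter> \<Inter>(A - {H}) = {0}"
proof -
  note A = arrangementD[OF assms(1)]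
  have "\<not> H \<subseteq> H'" if "H' \<in> A - {H}" for H'
    using subspace_dim_equal[of H H'] A(2) assms(2) that unfolding lin_hyperplane_def by auto
  then show "plane_arrangement H (A - {H})"
    using A(1,2) assms(2) lin_hyperplane_imp_linear_hyperplane
    unfolding plane_arrangement_def central_arrangement_def lin_hyperplane_def by auto
  show "H \<inter> \<Inter>(A - {H}) = {0}" using A(3) assms(2) by blast
qed

lemma subspace_flat: "arrangement A \<Longrightarrow> X \<in> flats A \<Longrightarrow> subspace X"
  unfolding flats_def using arrangementD(2) lin_hyperplane_def by (auto intro!: subspace_Inter)

lemma finite_flats: "finite A \<Longrightarrow> finite (flats A)"
proof -
  assume "finite A"
  have "flats A \<subseteq> Inter ` Pow A" unfolding flats_def by auto
  then show ?thesis by (rule finite_subset) (simp add: \<open>finite A\<close>)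
qed

lemma plane_lines_arrangement:
  assumes "arrangement A" "H \<in> A"
  shows "plane_lines H (A - {H}) = {X \<in> lines A. X \<subseteq> H}"
proof (intro equalityI subsetI)
  note PA = plane_arrangement_of_arrangement[OF assms]
  fix X assume X: "X \<in> plane_lines H (A - {H})"
  then obtain H' where "H' \<in> A - {H}" "X = H \<inter> H'" unfolding plane_lines_def by blast
  then have "X \<in> flats A" unfolding flats_def using assms(2) by (intro CollectI exI[of _ "{H, H'}"]) auto
  then show "X \<in> {X \<in> lines A. X \<subseteq> H}"
    using plane_line(2,3)[OF PA(1) X] unfolding lines_def by blast
next
  note PA = plane_arrangement_of_arrangement[OF assms]
  fix X assume "X \<in> {X \<in> lines A. X \<subseteq> H}"
  then obtain C where C: "C \<subseteq> A" "C \<noteq> {}" "X = \<Inter>C" and X: "dim X = 2" "X \<subseteq> H" "X \<in> flats A"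
    unfolding lines_def flats_def by blast
  have "dim H = 3" using arrangementD(2)[OF assms(1) assms(2)] unfolding lin_hyperplane_def by blast
  then have "C \<noteq> {H}" using C(3) X(1) by auto
  then obtain H' where H': "H' \<in> C" "H' \<noteq> H" using C(2) by blast
  have Y: "H \<inter> H' \<in> plane_lines H (A - {H})" using H' C(1) unfolding plane_lines_def by blast
  have "X \<subseteq> H \<inter> H'" using C(3) H'(1) X(2) by blast
  then have "X = H \<inter> H'"
    using subspace_dim_equal[OF subspace_flat[OF assms(1) X(3)]] plane_line(1,2)[OF PA(1) Y] X(1) by simp
  then show "X \<in> plane_lines H (A - {H})" using Y by simp
qed

lemma plane_points_arrangement:
  assumes "arrangement A" "H \<in> A"
  shows "plane_points H (A - {H}) = {v \<in> vertices A. v \<subseteq> H}"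
proof (intro equalityI subsetI)
  note PA = plane_arrangement_of_arrangement[OF assms]
  fix v assume v: "v \<in> plane_points H (A - {H})"
  then obtain H1 H2 where "H1 \<in> A" "H2 \<in> A" "v = (H \<inter> H1) \<inter> (H \<inter> H2)"
    unfolding plane_points_def plane_lines_def by blast
  then have "v = \<Inter>{H, H1, H2}" by auto
  then have "v \<in> flats A" unfolding flats_def using assms(2) \<open>H1 \<in> A\<close> \<open>H2 \<in> A\<close> by blast
  then show "v \<in> {v \<in> vertices A. v \<subseteq> H}" using plane_point(2,3)[OF PA(1) v] unfolding vertices_def by blast
next
  note PA = plane_arrangement_of_arrangement[OF assms]
  fix v assume "v \<in> {v \<in> vertices A. v \<subseteq> H}"
  then obtain C where C: "C \<subseteq> A" "v = \<Inter>C" and v: "dim v = 1" "v \<subseteq> H"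
    unfolding vertices_def flats_def by blast
  have "v = H \<inter> \<Inter>(C - {H})" using C(2) v(2) by auto
  moreover have "C - {H} \<subseteq> A - {H}" using C(1) by blast
  ultimately show "v \<in> plane_points H (A - {H})" using plane_point_if_dim_1[OF PA(1)] v(1) by metis
qed

lemma weight_le_card: "finite A \<Longrightarrow> weight A X \<le> card A"
  unfolding weight_def by (rule card_mono) auto

lemma vertex_weight_ge_3:
  assumes "arrangement A" "v \<in> vertices A"
  shows "3 \<le> weight A v"
proof -
  obtain H where H: "H \<in> A" "v \<subseteq> H" using assms(2) unfolding vertices_def flats_def by blast
  then have "v \<in> plane_points H (A - {H})" using plane_points_arrangement[OF assms(1)] assms(2) by blast
  then obtain H1 H2 where H12: "H1 \<in> A - {H}" "H2 \<in> A - {H}" "H \<inter> H1 \<noteq> H \<inter> H2"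
    and v: "v = (H \<inter> H1) \<inter> (H \<inter> H2)"
    unfolding plane_points_def plane_lines_def by blast
  have "H \<noteq> H1" "H \<noteq> H2" "H1 \<noteq> H2" using H12 by blast+
  then have "card {H, H1, H2} = 3" by simp
  moreover have "{H, H1, H2} \<subseteq> {H' \<in> A. v \<subseteq> H'}" using H H12 v by blast
  then have "card {H, H1, H2} \<le> weight A v"
    unfolding weight_def by (rule card_mono[rotated]) (simp add: arrangementD(1)[OF assms(1)])
  ultimately show ?thesis by simp
qed

lemma vertex_weight_le_m_max:
  assumes "arrangement A" "v \<in> vertices A"
  shows "weight A v \<le> m_max A"
proof -
  have fin: "finite A" "finite (vertices A)"
    using arrangementD(1)[OF assms(1)] finite_flats unfolding vertices_def by auto
  have "0 < t_num A (weight A v)" unfolding t_num_def using assms(2) fin(2) by (auto simp: card_gt_0_iff)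
  moreover have "{j. 3 \<le> j \<and> 0 < t_num A j} \<subseteq> {..card A}"
  proof
    fix j assume "j \<in> {j. 3 \<le> j \<and> 0 < t_num A j}"
    then obtain w where "weight A w = j" unfolding t_num_def by (auto simp: card_gt_0_iff)
    then show "j \<in> {..card A}" using weight_le_card[OF fin(1)] by auto
  qed
  then have "finite {j. 3 \<le> j \<and> 0 < t_num A j}" by (rule finite_subset) simp
  ultimately show ?thesis
    unfolding m_max_def using vertex_weight_ge_3[OF assms] by (intro Max_ge) auto
qed

lemma line_weight_ge_2:
  assumes "arrangement A" "X \<in> lines A"
  shows "2 \<le> weight A X"
proof -
  obtain H where H: "H \<in> A" "X \<subseteq> H" using assms(2) unfolding lines_def flats_def by blast
  then have "X \<in> plane_lines H (A - {H})" using plane_lines_arrangement[OF assms(1)] assms(2) by blast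
  then obtain H1 where H1: "H1 \<in> A - {H}" "X = H \<inter> H1" unfolding plane_lines_def by blast
  have "H \<noteq> H1" using H1(1) by blast
  then have "card {H, H1} = 2" by simp
  moreover have "{H, H1} \<subseteq> {H' \<in> A. X \<subseteq> H'}" using H H1 by blast
  then have "card {H, H1} \<le> weight A X"
    unfolding weight_def by (rule card_mono[rotated]) (simp add: arrangementD(1)[OF assms(1)])
  ultimately show ?thesis by simp
qed

lemma line_Int_hyperplane_vertex:
  assumes "arrangement A" "X \<in> lines A" "H \<in> A" "\<not> X \<subseteq> H"
  shows "X \<inter> H \<in> vertices A"
proof -
  obtain C where C: "C \<subseteq> A" "C \<noteq> {}" "X = \<Inter>C" using assms(2) unfolding lines_def flats_def by blast
  then have "X \<inter> H = \<Inter>(insert H C)" by auto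
  then have "X \<inter> H \<in> flats A"
    unfolding flats_def using C(1) assms(3) by (intro CollectI exI[of _ "insert H C"]) simp
  moreover have "dim (X \<inter> H) = 1"
    using dim_Int_linear_hyperplane[OF subspace_flat[OF assms(1)]
        lin_hyperplane_imp_linear_hyperplane[OF arrangementD(2)[OF assms(1,3)]] assms(4)] assms(2)
    unfolding lines_def by auto
  ultimately show ?thesis unfolding vertices_def by blast
qed

lemma line_weight_lt_m_max:
  assumes "arrangement A" "X \<in> lines A"
  shows "weight A X < m_max A"
proof -
  have "\<not> X \<subseteq> {0}" using assms(2) dim_eq_0[of X] unfolding lines_def by auto
  then have "\<not> X \<subseteq> \<Inter>A" unfolding arrangementD(3)[OF assms(1)] .
  then obtain H where H: "H \<in> A" "\<not> X \<subseteq> H" by blast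
  have "insert H {H' \<in> A. X \<subseteq> H'} \<subseteq> {H' \<in> A. X \<inter> H \<subseteq> H'}" using H(1) by blast
  then have "card (insert H {H' \<in> A. X \<subseteq> H'}) \<le> weight A (X \<inter> H)"
    unfolding weight_def using arrangementD(1)[OF assms(1)] by (intro card_mono) auto
  moreover have "card (insert H {H' \<in> A. X \<subseteq> H'}) = weight A X + 1"
    unfolding weight_def using H arrangementD(1)[OF assms(1)] by simp
  ultimately show ?thesis
    using vertex_weight_le_m_max[OF assms(1) line_Int_hyperplane_vertex[OF assms H]] by simp
qed

text \<open>Every hyperplane not containing X meets X in a vertex, and a vertex on X lies in at
  most m_max A - weight A X of these hyperplanes.\<close>

lemma card_vertices_on_line:
  assumes "arrangement A" "X \<in> lines A"
  shows "real (card A) - real (weight A X)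
    \<le> real (card {v \<in> vertices A. v \<subseteq> X}) * (real (m_max A) - real (weight A X))"
proof -
  let ?D = "{H \<in> A. \<not> X \<subseteq> H}" and ?V = "{v \<in> vertices A. v \<subseteq> X}"
  have "finite A" by (rule arrangementD(1)[OF assms(1)])
  then have fin: "finite ?D" "finite ?V" using finite_flats unfolding vertices_def by auto
  have img: "(\<lambda>H. X \<inter> H) ` ?D \<subseteq> ?V"
  proof
    fix v assume "v \<in> (\<lambda>H. X \<inter> H) ` ?D"
    then obtain H where "v = X \<inter> H" "H \<in> A" "\<not> X \<subseteq> H" by blast
    then show "v \<in> ?V" using line_Int_hyperplane_vertex[OF assms] by simp
  qed
  have fiber: "card {H \<in> ?D. X \<inter> H = v} \<le> m_max A - weight A X" if "v \<in> ?V" for v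
  proof -
    have "{H \<in> ?D. X \<inter> H = v} \<subseteq> {H \<in> A. v \<subseteq> H} - {H \<in> A. X \<subseteq> H}" by blast
    then have "card {H \<in> ?D. X \<inter> H = v} \<le> card ({H \<in> A. v \<subseteq> H} - {H \<in> A. X \<subseteq> H})"
      by (rule card_mono[rotated]) (simp add: \<open>finite A\<close>)
    also have "\<dots> = weight A v - weight A X"
      unfolding weight_def using that \<open>finite A\<close> by (intro card_Diff_subset) auto
    also have "\<dots> \<le> m_max A - weight A X"
      using vertex_weight_le_m_max[OF assms(1)] that by (intro diff_le_mono) simp
    finally show ?thesis .
  qed
  have "card ?D = (\<Sum>v\<in>?V. card {H \<in> ?D. X \<inter> H = v})"
    using sum.group[OF fin img, of "\<lambda>_. 1::nat"] by simp
  also have "\<dots> \<le> (\<Sum>v\<in>?V. m_max A - weight A X)" by (rule sum_mono) (rule fiber)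
  also have "\<dots> = card ?V * (m_max A - weight A X)" by simp
  finally have "real (card ?D) \<le> real (card ?V) * real (m_max A - weight A X)"
    by (simp only: of_nat_mult[symmetric] of_nat_le_iff)
  moreover have "card ?D = card A - weight A X"
  proof -
    have "?D = A - {H \<in> A. X \<subseteq> H}" by blast
    then show ?thesis unfolding weight_def using \<open>finite A\<close> by (simp add: card_Diff_subset)
  qed
  moreover have "weight A X \<le> card A" by (rule weight_le_card[OF \<open>finite A\<close>])
  ultimately show ?thesis using line_weight_lt_m_max[OF assms] by simp
qed

lemma sum_by_value:
  fixes w :: "'a \<Rightarrow> nat" and c :: "nat \<Rightarrow> real"
  assumes "finite S" "finite T" "w ` S \<subseteq> T"
  shows "(\<Sum>i\<in>T. c i * real (card {x \<in> S. w x = i})) = (\<Sum>x\<in>S. c (w x))"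
proof -
  have "(\<Sum>i\<in>T. c i * real (card {x \<in> S. w x = i})) = (\<Sum>i\<in>T. \<Sum>x\<in>{x \<in> S. w x = i}. c (w x))"
    by (rule sum.cong) auto
  also have "\<dots> = (\<Sum>x\<in>S. c (w x))" by (rule sum.group[OF assms])
  finally show ?thesis .
qed

lemma sum_weight_by_hyperplanes:
  assumes "finite A" "finite F"
  shows "(\<Sum>X\<in>F. real (weight A X) * f X) = (\<Sum>H\<in>A. \<Sum>X\<in>{X \<in> F. X \<subseteq> H}. f X)"
  using sum.swap_restrict[OF assms, of "\<lambda>H X. f X" "\<lambda>H X. X \<subseteq> H"] unfolding weight_def by simp

definition line_vertex_bound :: "(real^4) set set \<Rightarrow> (real^4) set \<Rightarrow> real" where
  "line_vertex_bound A X = (real (card A) - real (weight A X)) / (real (m_max A) - real (weight A X))"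

lemma line_vertex_bound_le:
  assumes "arrangement A" "X \<in> lines A"
  shows "line_vertex_bound A X \<le> real (card {v \<in> vertices A. v \<subseteq> X})"
  using card_vertices_on_line[OF assms] line_weight_lt_m_max[OF assms]
  unfolding line_vertex_bound_def by (simp add: divide_le_eq)

lemma hyperplane_vertex_bound:
  assumes "arrangement A" "H \<in> A"
  shows "1 + (\<Sum>X\<in>{X \<in> lines A. X \<subseteq> H}. line_vertex_bound A X) / 3
    \<le> real (card {v \<in> vertices A. v \<subseteq> H})"
proof -
  let ?L = "{X \<in> lines A. X \<subseteq> H}" and ?V = "{v \<in> vertices A. v \<subseteq> H}"
  have "finite (flats A)" using finite_flats[OF arrangementD(1)[OF assms(1)]] .
  then have fin: "finite ?L" "finite ?V" unfolding lines_def vertices_def by simp_all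
  have "3 + (\<Sum>v\<in>?V. card {X \<in> ?L. v \<subseteq> X}) \<le> 3 * card ?V"
    using melchior_inequality[OF plane_arrangement_of_arrangement[OF assms]]
    unfolding point_degree_def plane_points_arrangement[OF assms] plane_lines_arrangement[OF assms] .
  also have "(\<Sum>v\<in>?V. card {X \<in> ?L. v \<subseteq> X}) = (\<Sum>X\<in>?L. card {v \<in> ?V. v \<subseteq> X})"
    by (rule sum_multicount_gen[OF fin(2,1)]) simp
  also have "\<dots> = (\<Sum>X\<in>?L. card {v \<in> vertices A. v \<subseteq> X})"
  proof (rule sum.cong[OF refl])
    fix X assume "X \<in> ?L"
    then have "{v \<in> ?V. v \<subseteq> X} = {v \<in> vertices A. v \<subseteq> X}" by blast
    then show "card {v \<in> ?V. v \<subseteq> X} = card {v \<in> vertices A. v \<subseteq> X}" by simp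
  qed
  finally have "real (3 + (\<Sum>X\<in>?L. card {v \<in> vertices A. v \<subseteq> X})) \<le> real (3 * card ?V)"
    by (simp only: of_nat_le_iff)
  then have "3 + (\<Sum>X\<in>?L. real (card {v \<in> vertices A. v \<subseteq> X})) \<le> 3 * real (card ?V)"
    by simp
  moreover have "(\<Sum>X\<in>?L. line_vertex_bound A X) \<le> (\<Sum>X\<in>?L. real (card {v \<in> vertices A. v \<subseteq> X}))"
    by (rule sum_mono) (simp add: line_vertex_bound_le[OF assms(1)])
  ultimately show ?thesis by linarith
qed

lemma sum_t_num_eq:
  assumes "arrangement A"
  shows "(\<Sum>i=3..m_max A. real i * real (t_num A i)) = (\<Sum>H\<in>A. real (card {v \<in> vertices A. v \<subseteq> H}))"
proof -
  have fin: "finite A" "finite (vertices A)"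
    using arrangementD(1)[OF assms] finite_flats unfolding vertices_def by auto
  have "weight A ` vertices A \<subseteq> {3..m_max A}"
    using vertex_weight_ge_3[OF assms] vertex_weight_le_m_max[OF assms] by auto
  then have "(\<Sum>i=3..m_max A. real i * real (t_num A i)) = (\<Sum>v\<in>vertices A. real (weight A v) * 1)"
    unfolding t_num_def using sum_by_value[OF fin(2) finite_atLeastAtMost] by simp
  also have "\<dots> = (\<Sum>H\<in>A. real (card {v \<in> vertices A. v \<subseteq> H}))"
    using sum_weight_by_hyperplanes[OF fin, of "\<lambda>_. 1"] by simp
  finally show ?thesis .
qed

lemma sum_h_num_eq:
  assumes "arrangement A"
  shows "real (card A) + (\<Sum>i=2..m_max A - 1. (real i * (real (card A) - real i))
      / (3 * (real (m_max A) - real i)) * real (h_num A i))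
    = (\<Sum>H\<in>A. 1 + (\<Sum>X\<in>{X \<in> lines A. X \<subseteq> H}. line_vertex_bound A X) / 3)"
proof -
  have fin: "finite A" "finite (lines A)"
    using arrangementD(1)[OF assms] finite_flats unfolding lines_def by auto
  have "weight A ` lines A \<subseteq> {2..m_max A - 1}"
    using line_weight_ge_2[OF assms] line_weight_lt_m_max[OF assms] by fastforce
  then have "(\<Sum>i=2..m_max A - 1. (real i * (real (card A) - real i))
      / (3 * (real (m_max A) - real i)) * real (h_num A i))
    = (\<Sum>X\<in>lines A. (real (weight A X) * (real (card A) - real (weight A X)))
      / (3 * (real (m_max A) - real (weight A X))))"
    unfolding h_num_def by (rule sum_by_value[OF fin(2) finite_atLeastAtMost])
  also have "\<dots> = (\<Sum>X\<in>lines A. real (weight A X) * (line_vertex_bound A X / 3))"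
    unfolding line_vertex_bound_def by (simp add: ac_simps)
  also have "\<dots> = (\<Sum>H\<in>A. (\<Sum>X\<in>{X \<in> lines A. X \<subseteq> H}. line_vertex_bound A X) / 3)"
    using sum_weight_by_hyperplanes[OF fin, of "\<lambda>X. line_vertex_bound A X / 3"]
    by (simp add: sum_divide_distrib)
  finally show ?thesis by (simp add: sum.distrib)
qed

theorem corollary3:
  fixes A :: "(real^4) set set" and n m :: nat
  assumes "simplicial A"
    and "n = card A"
    and "m = m_max A"
  shows "(\<Sum>i=3..m. real i * real (t_num A i))
     \<ge> real n + (\<Sum>i=2..m-1. (real i * (real n - real i)) / (3 * (real m - real i)) * real (h_num A i))"
proof -
  have arr: "arrangement A" using assms(1) unfolding simplicial_def by blast
  have "(\<Sum>H\<in>A. 1 + (\<Sum>X\<in>{X \<in> lines A. X \<subseteq> H}. line_vertex_bound A X) / 3)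
      \<le> (\<Sum>H\<in>A. real (card {v \<in> vertices A. v \<subseteq> H}))"
    by (rule sum_mono) (rule hyperplane_vertex_bound[OF arr])
  then show ?thesis unfolding assms(2,3) sum_t_num_eq[OF arr] sum_h_num_eq[OF arr] .
qed

end
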